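(* Let $x$ be an allocation rule and suppose Assumptions D, X and T hold. Consider the Optimal Transfer Problem (P): maximize $\sum_{i=1}^2\int_\Theta T_i(\theta)\,dP(\theta)$ over transfer rules $t$ such that (i) $(x,t)$ is feasible and (ii) $t\in\mathcal{T}$. Consider also the Reduced Problem (R): maximize $\sum_{i=1}^2\int_\Theta T_i(\theta)\,dP(\theta)$ over transfer rules $t$ such that (i) $t$ is win-lose dependent (for $x$), (ii) $U_i^{\min}(\theta)=\int_{\underline\theta}^{\theta}X_i^{\min}(z)\,dz$ for every $i$ and every $\theta\in\Theta$, and (iii) $t\in\mathcal{T}$. Then every solution (maximizer) of problem (R) is a solution of problem (P).
   Context: Let $\Theta=[\underline\theta,\bar\theta]\subset\mathbb{R}$ with $0<\underline\theta<\bar\theta$, with Borel $\sigma$-algebra $\mathcal{B}$; "$\sigma$-algebra" always means a sub-$\sigma$-algebra of $\mathcal{B}$, and $\Delta(\Theta,\mathcal{A})$ is the set of probability measures on $(\Theta,\mathcal{A})$. For $\mathcal{E}\subset\mathcal{A}$ and $P\in\Delta(\Theta,\mathcal{A})$, $P_{\mathcal{E}}$ denotes the restriction of $P$ to $\mathcal{E}$. A divergence $D$ assigns to each pair $Q,P$ of probability measures on a common $\sigma$-algebra a number $D(Q\|P)\in[0,\infty]$. Assumption D: for every $\sigma$-algebra $\mathcal{A}$ and $P,Q\in\Delta(\Theta,\mathcal{A})$: (D1) $D(Q\|P)=0$ if $Q=P$; (D2) if $Q\ll P$ and $dQ/dP$ is bounded, then $\epsilon\mapsto D(\epsilon Q+(1-\epsilon)P\|P)$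 is continuous on $[0,1]$; (D3) if $D(Q\|P)<\infty$ then $Q\ll P$; (D4) for every sub-$\sigma$-algebra $\mathcal{E}\subset\mathcal{A}$, $D(Q_{\mathcal{E}}\|P_{\mathcal{E}})\le D(Q\|P)$; (D5) for every sub-$\sigma$-algebra $\mathcal{E}\subset\mathcal{A}$, $D(Q_{\mathcal{E}}\|P_{\mathcal{E}})=D(Q\|P)$ if $dQ_{\mathcal{E}}/dP_{\mathcal{E}}=dQ/dP$ $P$-a.e. Fix an atomless $P\in\Delta(\Theta,\mathcal{B})$ (the reference belief) and $\eta>0$; "a.e." means with respect to $P$ (or $P\otimes P$). There are two bidders $i\in\{1,2\}$. An allocation rule is a bounded measurable $x=(x_1,x_2):\Theta^2\to\mathbb{R}^2$ with $x_1(\theta,\theta')\ge0$, $x_2(\theta',\theta)\ge0$, $x_1(\theta,\theta')+x_2(\theta',\theta)\le1$ for all $\theta,\theta'$; a transfer rule is a bounded measurable $t=(t_1,t_2):\Theta^2\to\mathbb{R}^2$ ($x_i(\theta,\theta')$, $t_i(\theta,\theta')$ are bidder $i$'s winning probability and payment when she reports $\theta$ and the other reports $\theta'$). Define $X_i(\theta)=\int x_i(\theta,\theta')dP(\theta')$, $X_i^{\min}(\theta)=\inf_Q\{\int x_i(\theta,\theta')dQ(\theta'):D(Q\|P)\le\eta\}$, $U_i^{\min}(\theta)=\inf_Q\{\int[\theta x_i(\theta,\theta')-t_i(\theta,\theta')]dQ(\theta'):D(Q\|P)\le\eta\}$, $T_i(\theta)=\int t_i(\theta,\theta')dP(\theta')$,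 where $Q$ ranges over $\Delta(\Theta,\mathcal{B})$. $(x,t)$ is incentive compatible if for all $i,\theta$, $\theta$ maximizes over $\hat\theta\in\Theta$ the quantity $\inf_Q\{\int[\theta x_i(\hat\theta,\theta')-t_i(\hat\theta,\theta')]dQ(\theta'):D(Q\|P)\le\eta\}$; individually rational if $U_i^{\min}(\theta)\ge0$ for all $i,\theta$; feasible if both hold. Assumption X (on $x$): (i) $x_i(\theta,\theta')\in\{0,1\}$ whenever $\theta'\neq\theta$; (ii) $X_i(\theta)=1$ implies $\theta=\bar\theta$; (iii) $X_i^{\min}$ is non-decreasing. Assumption T: constants $0\le\alpha\le\beta\le1$, $K\ge0$ are given, and $\mathcal{T}$ is the class of transfer rules $t$ such that for every $i$, every $\theta<\bar\theta$ and all $\theta^w,\theta^l$ with $x_i(\theta,\theta^w)=1$ and $x_i(\theta,\theta^l)=0$, one has $\alpha t_i(\theta,\theta^w)-\beta t_i(\theta,\theta^l)\le K$. A transfer rule $t$ is win-lose dependent (for $x$) if there exist $t_i^w,t_i^l:\Theta\to\mathbb{R}$ with $t_i(\theta,\theta')=t_i^w(\theta)x_i(\theta,\theta')+t_i^l(\theta)[1-x_i(\theta,\theta')]$ and $\theta-t_i^w(\theta)\ge-t_i^l(\theta)$ for all $i,\theta,\theta'$. *)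

theory Defs
  imports "HOL-Probability.Probability"
begin

definition Bor :: "real \<Rightarrow> real \<Rightarrow> real measure" where
  "Bor a b = restrict_space borel {a..b}"

definition subsigma :: "real set \<Rightarrow> real set set \<Rightarrow> bool" where
  "subsigma S A \<longleftrightarrow> sigma_algebra S A \<and> A \<subseteq> sets (restrict_space borel S)"

definition prob_on :: "real set \<Rightarrow> real set set \<Rightarrow> real measure \<Rightarrow> bool" where
  "prob_on S A Q \<longleftrightarrow> prob_space Q \<and> space Q = S \<and> sets Q = A"

definition restr :: "real measure \<Rightarrow> real set set \<Rightarrow> real measure" where
  "restr Q E = measure_of (space Q) E (emeasure Q)"

definition mix :: "real \<Rightarrow> real measure \<Rightarrow> real measure \<Rightarrow> real measure" where
  "mix e Q P = measure_of (space P) (sets P)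
     (\<lambda>A. ennreal e * emeasure Q A + ennreal (1 - e) * emeasure P A)"

definition atomless :: "real measure \<Rightarrow> bool" where
  "atomless P \<longleftrightarrow> \<not> (\<exists>A\<in>sets P. emeasure P A > 0 \<and>
      (\<forall>B\<in>sets P. B \<subseteq> A \<longrightarrow> emeasure P B = 0 \<or> emeasure P B = emeasure P A))"

text \<open>Assumption D on a divergence D (D Q P stands for D(Q||P)).\<close>
definition assumption_D :: "real \<Rightarrow> real \<Rightarrow> (real measure \<Rightarrow> real measure \<Rightarrow> ennreal) \<Rightarrow> bool" where
  "assumption_D a b D \<longleftrightarrow>
    (\<forall>A P Q. subsigma {a..b} A \<and> prob_on {a..b} A P \<and> prob_on {a..b} A Q \<longrightarrow>
      (Q = P \<longrightarrow> D Q P = 0) \<and>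
      (absolutely_continuous P Q \<and> (\<exists>C::real. AE z in P. RN_deriv P Q z \<le> ennreal C) \<longrightarrow>
         continuous_on {0..1} (\<lambda>e. D (mix e Q P) P)) \<and>
      (D Q P < \<infinity> \<longrightarrow> absolutely_continuous P Q) \<and>
      (\<forall>E. subsigma {a..b} E \<and> E \<subseteq> A \<longrightarrow>
         D (restr Q E) (restr P E) \<le> D Q P \<and>
         (absolutely_continuous P Q \<and>
          (AE z in P. RN_deriv (restr P E) (restr Q E) z = RN_deriv P Q z) \<longrightarrow>
            D (restr Q E) (restr P E) = D Q P)))"

text \<open>Bidders are indexed by 1 and 2; x i u v = winning probability of bidder i reporting u
  when the other bidder reports v.  Only values on {a..b} x {a..b} matter.\<close>

definition bounded_measurable_rule :: "real \<Rightarrow> real \<Rightarrow> (nat \<Rightarrow> real \<Rightarrow> real \<Rightarrow> real) \<Rightarrow> bool" where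
  "bounded_measurable_rule a b f \<longleftrightarrow>
    (\<forall>i\<in>{1,2}. (\<lambda>(u, v). f i u v) \<in> borel_measurable (Bor a b \<Otimes>\<^sub>M Bor a b) \<and>
       (\<exists>C. \<forall>u\<in>{a..b}. \<forall>v\<in>{a..b}. \<bar>f i u v\<bar> \<le> C))"

definition allocation_rule :: "real \<Rightarrow> real \<Rightarrow> (nat \<Rightarrow> real \<Rightarrow> real \<Rightarrow> real) \<Rightarrow> bool" where
  "allocation_rule a b x \<longleftrightarrow> bounded_measurable_rule a b x \<and>
    (\<forall>u\<in>{a..b}. \<forall>v\<in>{a..b}. x 1 u v \<ge> 0 \<and> x 2 v u \<ge> 0 \<and> x 1 u v + x 2 v u \<le> 1)"

definition transfer_rule :: "real \<Rightarrow> real \<Rightarrow> (nat \<Rightarrow> real \<Rightarrow> real \<Rightarrow> real) \<Rightarrow> bool" where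
  "transfer_rule a b t \<longleftrightarrow> bounded_measurable_rule a b t"

definition amb :: "real \<Rightarrow> real \<Rightarrow> (real measure \<Rightarrow> real measure \<Rightarrow> ennreal) \<Rightarrow> real measure \<Rightarrow> real \<Rightarrow> real measure set" where
  "amb a b D P \<eta> = {Q. prob_on {a..b} (sets (Bor a b)) Q \<and> D Q P \<le> ennreal \<eta>}"

definition Xexp :: "real measure \<Rightarrow> (nat \<Rightarrow> real \<Rightarrow> real \<Rightarrow> real) \<Rightarrow> nat \<Rightarrow> real \<Rightarrow> real" where
  "Xexp P x i \<theta> = (\<integral>\<theta>'. x i \<theta> \<theta>' \<partial>P)"

definition Xmin :: "real \<Rightarrow> real \<Rightarrow> (real measure \<Rightarrow> real measure \<Rightarrow> ennreal) \<Rightarrow> real measure \<Rightarrow> real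
    \<Rightarrow> (nat \<Rightarrow> real \<Rightarrow> real \<Rightarrow> real) \<Rightarrow> nat \<Rightarrow> real \<Rightarrow> real" where
  "Xmin a b D P \<eta> x i \<theta> = Inf ((\<lambda>Q. \<integral>\<theta>'. x i \<theta> \<theta>' \<partial>Q) ` amb a b D P \<eta>)"

text \<open>Worst-case utility of type th when reporting th_hat.\<close>
definition Urep :: "real \<Rightarrow> real \<Rightarrow> (real measure \<Rightarrow> real measure \<Rightarrow> ennreal) \<Rightarrow> real measure \<Rightarrow> real
    \<Rightarrow> (nat \<Rightarrow> real \<Rightarrow> real \<Rightarrow> real) \<Rightarrow> (nat \<Rightarrow> real \<Rightarrow> real \<Rightarrow> real) \<Rightarrow> nat \<Rightarrow> real \<Rightarrow> real \<Rightarrow> real" where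
  "Urep a b D P \<eta> x t i \<theta> \<theta>h =
     Inf ((\<lambda>Q. \<integral>\<theta>'. \<theta> * x i \<theta>h \<theta>' - t i \<theta>h \<theta>' \<partial>Q) ` amb a b D P \<eta>)"

definition Umin :: "real \<Rightarrow> real \<Rightarrow> (real measure \<Rightarrow> real measure \<Rightarrow> ennreal) \<Rightarrow> real measure \<Rightarrow> real
    \<Rightarrow> (nat \<Rightarrow> real \<Rightarrow> real \<Rightarrow> real) \<Rightarrow> (nat \<Rightarrow> real \<Rightarrow> real \<Rightarrow> real) \<Rightarrow> nat \<Rightarrow> real \<Rightarrow> real" where
  "Umin a b D P \<eta> x t i \<theta> =
     Inf ((\<lambda>Q. \<integral>\<theta>'. \<theta> * x i \<theta> \<theta>' - t i \<theta> \<theta>' \<partial>Q) ` amb a b D P \<eta>)"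

definition Texp :: "real measure \<Rightarrow> (nat \<Rightarrow> real \<Rightarrow> real \<Rightarrow> real) \<Rightarrow> nat \<Rightarrow> real \<Rightarrow> real" where
  "Texp P t i \<theta> = (\<integral>\<theta>'. t i \<theta> \<theta>' \<partial>P)"

definition incentive_compatible where
  "incentive_compatible a b D P \<eta> x t \<longleftrightarrow>
     (\<forall>i\<in>{1,2::nat}. \<forall>\<theta>\<in>{a..b}. \<forall>\<theta>h\<in>{a..b}.
        Urep a b D P \<eta> x t i \<theta> \<theta>h \<le> Urep a b D P \<eta> x t i \<theta> \<theta>)"

definition individually_rational where
  "individually_rational a b D P \<eta> x t \<longleftrightarrow>
     (\<forall>i\<in>{1,2::nat}. \<forall>\<theta>\<in>{a..b}. Umin a b D P \<eta> x t i \<theta> \<ge> 0)"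

definition feasible where
  "feasible a b D P \<eta> x t \<longleftrightarrow>
     incentive_compatible a b D P \<eta> x t \<and> individually_rational a b D P \<eta> x t"

definition assumption_X where
  "assumption_X a b D P \<eta> x \<longleftrightarrow>
     (\<forall>i\<in>{1,2::nat}.
        (\<forall>\<theta>\<in>{a..b}. \<forall>\<theta>'\<in>{a..b}. \<theta>' \<noteq> \<theta> \<longrightarrow> x i \<theta> \<theta>' \<in> {0,1}) \<and>
        (\<forall>\<theta>\<in>{a..b}. Xexp P x i \<theta> = 1 \<longrightarrow> \<theta> = b) \<and>
        mono_on {a..b} (Xmin a b D P \<eta> x i))"

definition Tclass :: "real \<Rightarrow> real \<Rightarrow> real \<Rightarrow> real \<Rightarrow> real
    \<Rightarrow> (nat \<Rightarrow> real \<Rightarrow> real \<Rightarrow> real) \<Rightarrow> (nat \<Rightarrow> real \<Rightarrow> real \<Rightarrow> real) \<Rightarrow> bool" where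
  "Tclass a b \<alpha> \<beta> K x t \<longleftrightarrow>
     (\<forall>i\<in>{1,2::nat}. \<forall>\<theta>\<in>{a..b}. \<theta> < b \<longrightarrow>
        (\<forall>\<theta>w\<in>{a..b}. \<forall>\<theta>l\<in>{a..b}. x i \<theta> \<theta>w = 1 \<and> x i \<theta> \<theta>l = 0 \<longrightarrow>
            \<alpha> * t i \<theta> \<theta>w - \<beta> * t i \<theta> \<theta>l \<le> K))"

definition win_lose_dependent :: "real \<Rightarrow> real \<Rightarrow> (nat \<Rightarrow> real \<Rightarrow> real \<Rightarrow> real)
    \<Rightarrow> (nat \<Rightarrow> real \<Rightarrow> real \<Rightarrow> real) \<Rightarrow> bool" where
  "win_lose_dependent a b x t \<longleftrightarrow>
     (\<exists>tw tl :: nat \<Rightarrow> real \<Rightarrow> real. \<forall>i\<in>{1,2::nat}. \<forall>\<theta>\<in>{a..b}.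
        \<theta> - tw i \<theta> \<ge> - tl i \<theta> \<and>
        (\<forall>\<theta>'\<in>{a..b}. t i \<theta> \<theta>' = tw i \<theta> * x i \<theta> \<theta>' + tl i \<theta> * (1 - x i \<theta> \<theta>')))"

definition revenue :: "real measure \<Rightarrow> (nat \<Rightarrow> real \<Rightarrow> real \<Rightarrow> real) \<Rightarrow> real" where
  "revenue P t = (\<Sum>i\<in>{1,2::nat}. \<integral>\<theta>. Texp P t i \<theta> \<partial>P)"

definition constraints_P where
  "constraints_P a b D P \<eta> \<alpha> \<beta> K x t \<longleftrightarrow>
     transfer_rule a b t \<and> feasible a b D P \<eta> x t \<and> Tclass a b \<alpha> \<beta> K x t"

definition constraints_R where
  "constraints_R a b D P \<eta> \<alpha> \<beta> K x t \<longleftrightarrow>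
     transfer_rule a b t \<and> win_lose_dependent a b x t \<and>
     (\<forall>i\<in>{1,2::nat}. \<forall>\<theta>\<in>{a..b}.
        Umin a b D P \<eta> x t i \<theta> = integral {a..\<theta>} (Xmin a b D P \<eta> x i)) \<and>
     Tclass a b \<alpha> \<beta> K x t"

definition solves :: "real measure \<Rightarrow> ((nat \<Rightarrow> real \<Rightarrow> real \<Rightarrow> real) \<Rightarrow> bool)
    \<Rightarrow> (nat \<Rightarrow> real \<Rightarrow> real \<Rightarrow> real) \<Rightarrow> bool" where
  "solves P C t \<longleftrightarrow> C t \<and> (\<forall>t'. C t' \<longrightarrow> revenue P t' \<le> revenue P t)"

end

theory Submission
  imports Defs
begin

text \<open>
  Fix a bidder and write \<open>V(\<theta>)\<close> for the integral of \<open>Xmin\<close> over \<open>[a, \<theta>]\<close>. For a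
  win-lose dependent transfer the worst-case utility of type \<open>\<theta>\<close> reporting \<open>h\<close> is affine in
  \<open>Xmin(h)\<close>. So \<open>Umin = V\<close> gives incentive compatibility, because the monotone \<open>Xmin\<close> makes
  \<open>V\<close> convex with subgradient \<open>Xmin\<close>, and \<open>V \<ge> 0\<close> gives individual rationality: solutions
  of (R) are feasible for (P).

  Conversely, let \<open>t\<close> be admissible for (P) and \<open>\<theta> < b\<close>. Incentive compatibility forces
  \<open>Umin(\<theta>) \<ge> V(\<theta>)\<close>. Off the null set \<open>{\<theta>}\<close> the allocation of type \<open>\<theta>\<close> is the indicator
  of a win set \<open>W\<close>. Replacing a belief by the one that keeps its weights of \<open>W\<close> and of the
  complement but follows \<open>P\<close> inside each does not increase the divergence (D4, D5); hence
  \<open>Umin(\<theta>)\<close> is bounded by the worst mixture of the two conditional mean payoffs under \<open>P\<close>,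
  which assumption T in turn constrains. The outcome is
  \<open>Texp(\<theta>) \<le> \<theta> X(\<theta>) - V(\<theta>) - c (X(\<theta>) - Xmin(\<theta>))\<close> with \<open>X = Xexp\<close> and \<open>c\<close> the least
  nonnegative slope compatible with T. The win-lose transfer with utility \<open>V\<close> and slope \<open>c\<close>
  attains this bound and satisfies (R), so its revenue dominates that of \<open>t\<close> and is dominated
  by that of every solution of (R).
\<close>

lemma space_Bor [simp]: "space (Bor a b) = {a..b}"
  by (simp add: Bor_def)

lemma subsigma_Bor: "subsigma {a..b} (sets (Bor a b))"
  using sets.sigma_algebra_axioms[of "Bor a b"] by (simp add: subsigma_def Bor_def)

lemma prob_on_Bor_D:
  assumes "prob_on {a..b} (sets (Bor a b)) Q"
  shows "prob_space Q" and "space Q = {a..b}" and "sets Q = sets (Bor a b)"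
  using assms by (auto simp: prob_on_def)

lemma measurable_prob_on_Bor:
  assumes "prob_on {a..b} (sets (Bor a b)) Q" and "g \<in> borel_measurable (Bor a b)"
  shows "g \<in> borel_measurable Q"
  using assms measurable_cong_sets[of Q "Bor a b" borel borel] by (auto simp: prob_on_def)

definition bounded_measurable_on :: "real \<Rightarrow> real \<Rightarrow> (real \<Rightarrow> real) \<Rightarrow> bool" where
  "bounded_measurable_on a b g \<longleftrightarrow>
     g \<in> borel_measurable (Bor a b) \<and> (\<exists>C. \<forall>v\<in>{a..b}. \<bar>g v\<bar> \<le> C)"

lemma bounded_measurable_on_measurable:
  "bounded_measurable_on a b g \<Longrightarrow> g \<in> borel_measurable (Bor a b)"
  by (simp add: bounded_measurable_on_def)

lemma bounded_measurable_onE: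
  assumes "bounded_measurable_on a b g"
  obtains C where "\<And>v. v \<in> {a..b} \<Longrightarrow> \<bar>g v\<bar> \<le> C"
  using assms unfolding bounded_measurable_on_def by blast

lemma bounded_measurable_on_section:
  assumes "bounded_measurable_rule a b f" and "i \<in> {1,2}" and "u \<in> {a..b}"
  shows "bounded_measurable_on a b (f i u)"
proof -
  from assms obtain C where
    f: "(\<lambda>(u, v). f i u v) \<in> borel_measurable (Bor a b \<Otimes>\<^sub>M Bor a b)"
    and C: "\<forall>u\<in>{a..b}. \<forall>v\<in>{a..b}. \<bar>f i u v\<bar> \<le> C"
    unfolding bounded_measurable_rule_def by blast
  have "f i u \<in> borel_measurable (Bor a b)"
    using measurable_Pair2[OF f, of u] assms(3) by simp
  moreover have "\<forall>v\<in>{a..b}. \<bar>f i u v\<bar> \<le> C"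
    using C assms(3) by blast
  ultimately show ?thesis
    unfolding bounded_measurable_on_def by blast
qed

lemma bounded_measurable_on_affine:
  assumes "bounded_measurable_on a b f" and "bounded_measurable_on a b g"
  shows "bounded_measurable_on a b (\<lambda>v. c * f v - g v)"
proof -
  obtain Cf Cg where f: "\<And>v. v \<in> {a..b} \<Longrightarrow> \<bar>f v\<bar> \<le> Cf"
    and g: "\<And>v. v \<in> {a..b} \<Longrightarrow> \<bar>g v\<bar> \<le> Cg"
    using assms by (metis bounded_measurable_onE)
  have "\<bar>c * f v - g v\<bar> \<le> \<bar>c\<bar> * Cf + Cg" if "v \<in> {a..b}" for v
  proof -
    have "\<bar>c * f v\<bar> \<le> \<bar>c\<bar> * Cf"
      unfolding abs_mult by (rule mult_left_mono[OF f[OF that]]) simp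
    then show ?thesis using g[OF that] by linarith
  qed
  moreover have "(\<lambda>v. c * f v - g v) \<in> borel_measurable (Bor a b)"
    using assms[THEN bounded_measurable_on_measurable] by measurable
  ultimately show ?thesis
    unfolding bounded_measurable_on_def by blast
qed

lemma bounded_measurable_on_indicator_mult:
  assumes "bounded_measurable_on a b g" and "S \<in> sets (Bor a b)"
  shows "bounded_measurable_on a b (\<lambda>v. indicator S v * g v)"
proof -
  obtain C where g: "\<And>v. v \<in> {a..b} \<Longrightarrow> \<bar>g v\<bar> \<le> C"
    using assms(1) by (metis bounded_measurable_onE)
  have "\<bar>indicator S v * g v\<bar> \<le> \<bar>C\<bar>" if "v \<in> {a..b}" for v
    using g[OF that] by (auto simp: indicator_def)
  moreover have "(\<lambda>v. indicator S v * g v) \<in> borel_measurable (Bor a b)"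
    using bounded_measurable_on_measurable[OF assms(1)] assms(2) by measurable
  ultimately show ?thesis
    unfolding bounded_measurable_on_def by blast
qed

lemma integrable_bounded_measurable_on:
  assumes Q: "prob_on {a..b} (sets (Bor a b)) Q" and g: "bounded_measurable_on a b g"
  shows "integrable Q g"
proof -
  interpret prob_space Q using prob_on_Bor_D[OF Q] by simp
  obtain C where "\<And>v. v \<in> {a..b} \<Longrightarrow> \<bar>g v\<bar> \<le> C"
    using g by (metis bounded_measurable_onE)
  then show ?thesis
    using measurable_prob_on_Bor[OF Q bounded_measurable_on_measurable[OF g]] prob_on_Bor_D(2)[OF Q]
    by (intro integrable_const_bound[where B = C]) auto
qed

lemma integral_between_Bor:
  fixes g :: "real \<Rightarrow> real"
  assumes Q: "prob_on {a..b} (sets (Bor a b)) Q" and g: "g \<in> borel_measurable (Bor a b)"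
    and bounds: "\<And>v. v \<in> {a..b} \<Longrightarrow> lo \<le> g v \<and> g v \<le> hi"
  shows "lo \<le> (\<integral>v. g v \<partial>Q)" and "(\<integral>v. g v \<partial>Q) \<le> hi"
proof -
  interpret prob_space Q using prob_on_Bor_D[OF Q] by simp
  have "\<bar>g v\<bar> \<le> \<bar>lo\<bar> + \<bar>hi\<bar>" if "v \<in> {a..b}" for v
    using bounds[OF that] by linarith
  then have "bounded_measurable_on a b g"
    unfolding bounded_measurable_on_def using g by blast
  then have int: "integrable Q g"
    by (rule integrable_bounded_measurable_on[OF Q])
  show "lo \<le> (\<integral>v. g v \<partial>Q)"
    by (rule integral_ge_const[OF int]) (use bounds prob_on_Bor_D(2)[OF Q] in auto)
  show "(\<integral>v. g v \<partial>Q) \<le> hi"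
    by (rule integral_le_const[OF int]) (use bounds prob_on_Bor_D(2)[OF Q] in auto)
qed

section \<open>Affine infima, monotone integrands and least slopes\<close>

lemma cINF_affine:
  fixes F :: "'a \<Rightarrow> real"
  assumes "S \<noteq> {}" and "bdd_below (F ` S)" and "0 \<le> k"
  shows "(INF s\<in>S. k * F s + m) = k * (INF s\<in>S. F s) + m"
proof -
  have "mono (\<lambda>y. k * y + m)"
    unfolding mono_def using assms(3) by (simp add: mult_left_mono)
  moreover have "continuous (at_right (Inf (F ` S))) (\<lambda>y. k * y + m)"
    by (intro continuous_intros)
  ultimately show ?thesis
    using continuous_at_Inf_mono[of "\<lambda>y. k * y + m" "F ` S"] assms(1,2)
    by (simp add: image_image)
qed

lemma cINF_affine_le:
  fixes F :: "'a \<Rightarrow> real"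
  assumes "s0 \<in> S" and "bdd_below (F ` S)" and "bdd_above (F ` S)"
  shows "(INF s\<in>S. k * F s + m) \<le> k * (INF s\<in>S. F s) + m"
proof (cases "0 \<le> k")
  case True
  have "S \<noteq> {}" using assms(1) by auto
  then show ?thesis using cINF_affine[OF _ assms(2) True] by simp
next
  case False
  obtain M where M: "\<And>s. s \<in> S \<Longrightarrow> F s \<le> M"
    using assms(3) by (auto simp: bdd_above_def)
  have "bdd_below ((\<lambda>s. k * F s + m) ` S)"
  proof (rule bdd_belowI2)
    fix s assume "s \<in> S"
    then show "k * M + m \<le> k * F s + m"
      using M False by (simp add: mult_left_mono_neg)
  qed
  then have "(INF s\<in>S. k * F s + m) \<le> k * F s0 + m"
    using assms(1) by (rule cINF_lower)
  also have "\<dots> \<le> k * (INF s\<in>S. F s) + m"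
    using cINF_lower[OF assms(2,1)] False by (simp add: mult_left_mono_neg)
  finally show ?thesis .
qed

lemma cINF_add_mult_ge:
  fixes f g :: "'a \<Rightarrow> real"
  assumes "S \<noteq> {}" and "bdd_below (f ` S)" and "bdd_below (g ` S)" and "0 \<le> c"
  shows "(INF s\<in>S. f s) + c * (INF s\<in>S. g s) \<le> (INF s\<in>S. f s + c * g s)"
proof (rule cINF_greatest[OF assms(1)])
  fix s assume "s \<in> S"
  then show "(INF s\<in>S. f s) + c * (INF s\<in>S. g s) \<le> f s + c * g s"
    using cINF_lower[OF assms(2)] cINF_lower[OF assms(3)] assms(4)
    by (intro add_mono mult_left_mono) auto
qed

lemma mono_on_integral_increment:
  fixes f :: "real \<Rightarrow> real"
  assumes f: "mono_on {a..b} f" and "a \<le> s" "s \<le> s'" "s' \<le> b"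
  shows "(s' - s) * f s \<le> integral {a..s'} f - integral {a..s} f"
    and "integral {a..s'} f - integral {a..s} f \<le> (s' - s) * f s'"
proof -
  have "f integrable_on {a..s'}"
    by (rule integrable_on_mono_on, rule mono_on_subset[OF f]) (use assms in auto)
  then have split: "integral {a..s'} f - integral {a..s} f = integral {s..s'} f"
    using Henstock_Kurzweil_Integration.integral_combine[OF assms(2,3)] by fastforce
  have int: "f integrable_on {s..s'}"
    by (rule integrable_on_mono_on, rule mono_on_subset[OF f]) (use assms in auto)
  have "integral {s..s'} (\<lambda>_. f s) \<le> integral {s..s'} f"
    by (rule integral_le) (use int assms in \<open>auto intro!: mono_onD[OF f]\<close>)
  then show "(s' - s) * f s \<le> integral {a..s'} f - integral {a..s} f"
    using assms split by simp
  have "integral {s..s'} f \<le> integral {s..s'} (\<lambda>_. f s')"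
    by (rule integral_le) (use int assms in \<open>auto intro!: mono_onD[OF f]\<close>)
  then show "integral {a..s'} f - integral {a..s} f \<le> (s' - s) * f s'"
    using assms split by simp
qed

lemma mono_on_integral_tangent_le:
  fixes f :: "real \<Rightarrow> real"
  assumes f: "mono_on {a..b} f" and "s \<in> {a..b}" and "\<theta> \<in> {a..b}"
  shows "integral {a..s} f + (\<theta> - s) * f s \<le> integral {a..\<theta>} f"
proof (cases "s \<le> \<theta>")
  case True
  then show ?thesis using mono_on_integral_increment(1)[OF f, of s \<theta>] assms by auto
next
  case False
  then show ?thesis
    using mono_on_integral_increment(2)[OF f, of \<theta> s] assms by (auto simp: algebra_simps)
qed

lemma mono_on_integral_le_increment:
  fixes f U :: "real \<Rightarrow> real"
  assumes f: "mono_on {a..b} f" and "a \<le> \<theta>" and "\<theta> \<le> b"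
    and U: "\<And>s s'. a \<le> s \<Longrightarrow> s \<le> s' \<Longrightarrow> s' \<le> \<theta> \<Longrightarrow> (s' - s) * f s \<le> U s' - U s"
  shows "integral {a..\<theta>} f \<le> U \<theta> - U a"
proof -
  define g where "g s = U s - integral {a..s} f" for s
  have step: "g s - (s' - s) * (f s' - f s) \<le> g s'" if "a \<le> s" "s \<le> s'" "s' \<le> \<theta>" for s s'
    using U[OF that] mono_on_integral_increment(2)[OF f that(1,2)] that assms(3)
    by (simp add: g_def algebra_simps)
  \<comment> \<open>Telescoping over \<open>n\<close> equal steps, the errors add up to \<open>(\<theta> - a) / n * (f \<theta> - f a)\<close>.\<close>
  have fine: "g a - (\<theta> - a) / real n * (f \<theta> - f a) \<le> g \<theta>" if "n \<ge> 1" for n :: nat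
  proof -
    define h where "h = (\<theta> - a) / real n"
    have h: "0 \<le> h" "a + real n * h = \<theta>"
      using assms(2) that by (auto simp: h_def)
    have "g a - h * (f (a + real k * h) - f a) \<le> g (a + real k * h)" if "k \<le> n" for k
      using that
    proof (induction k)
      case 0
      then show ?case by simp
    next
      case (Suc k)
      have "a + real (Suc k) * h \<le> a + real n * h"
        using Suc.prems h(1) by (intro add_left_mono mult_right_mono) auto
      then have "g (a + real k * h) - h * (f (a + real (Suc k) * h) - f (a + real k * h))
          \<le> g (a + real (Suc k) * h)"
        using step[of "a + real k * h" "a + real (Suc k) * h"] h by (simp add: algebra_simps)
      then show ?case
        using Suc by (simp add: algebra_simps)
    qed
    from this[of n] show ?thesis by (simp only: h(2)) (simp add: h_def)
  qed
  have "(\<lambda>n. g a - (\<theta> - a) / real n * (f \<theta> - f a)) \<longlonglongrightarrow> g a - 0 * (f \<theta> - f a)"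
    by (intro tendsto_intros)
  then have "g a \<le> g \<theta>"
    by (intro LIMSEQ_le_const2[of _ "g a"]) (use fine in auto)
  then show ?thesis by (simp add: g_def)
qed

definition least_slope :: "real \<Rightarrow> real \<Rightarrow> real" where
  "least_slope n d = (if 0 < d then max 0 (n / d) else 0)"

lemma least_slope_nonneg: "0 \<le> least_slope n d"
  by (simp add: least_slope_def)

lemma least_slope_le:
  assumes "0 \<le> c" and "n \<le> c * d"
  shows "least_slope n d \<le> c"
  using assms by (auto simp: least_slope_def divide_le_eq)

lemma le_least_slope_mult:
  assumes "0 \<le> d" and "n \<le> c * d"
  shows "n \<le> least_slope n d * d"
proof (cases "0 < d")
  case True
  then show ?thesis by (cases "0 \<le> n") (auto simp: least_slope_def max_def)
next
  case False
  then show ?thesis using assms by (simp add: least_slope_def)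
qed

lemma least_slope_envelope_bound:
  fixes V U UP X Xm uW uL \<theta> \<alpha> \<beta> K :: real
  assumes "V \<le> U" and "U \<le> UP" and UP: "UP = uL + X * (uW - uL)"
    and coarse: "uL \<le> uW \<Longrightarrow> U \<le> uL + (uW - uL) * Xm"
    and T: "\<alpha> * (\<theta> - uW) + \<beta> * uL \<le> K"
    and X: "0 \<le> Xm" "Xm \<le> X" and \<alpha>\<beta>: "0 \<le> \<alpha>" "\<alpha> \<le> \<beta>"
  shows "V + least_slope (\<alpha> * \<theta> + (\<beta> - \<alpha>) * V - K) (\<alpha> + (\<beta> - \<alpha>) * Xm) * (X - Xm) \<le> UP"
proof (cases "uL \<le> uW")
  case True
  define c where "c = uW - uL"
  have V: "V - c * Xm \<le> uL"
    using coarse[OF True] assms(1) by (simp add: c_def)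
  have "(\<beta> - \<alpha>) * (V - c * Xm) \<le> (\<beta> - \<alpha>) * uL"
    using V \<alpha>\<beta> by (intro mult_left_mono) auto
  then have "\<alpha> * \<theta> + (\<beta> - \<alpha>) * V - K \<le> c * (\<alpha> + (\<beta> - \<alpha>) * Xm)"
    using T by (simp add: c_def algebra_simps)
  then have "least_slope (\<alpha> * \<theta> + (\<beta> - \<alpha>) * V - K) (\<alpha> + (\<beta> - \<alpha>) * Xm) \<le> c"
    using True by (intro least_slope_le) (auto simp: c_def)
  then have "least_slope (\<alpha> * \<theta> + (\<beta> - \<alpha>) * V - K) (\<alpha> + (\<beta> - \<alpha>) * Xm) * (X - Xm)
      \<le> c * (X - Xm)"
    using X by (intro mult_right_mono) auto
  then show ?thesis
    using V UP by (simp add: c_def algebra_simps)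
next
  case False
  have "X * (uW - uL) \<le> 0"
    using False X by (intro mult_nonneg_nonpos) auto
  then have "V \<le> uL"
    using assms(1,2) UP by linarith
  then have "(\<beta> - \<alpha>) * V + \<alpha> * uW \<le> (\<beta> - \<alpha>) * uL + \<alpha> * uL"
    using False \<alpha>\<beta> by (intro add_mono mult_left_mono) auto
  then have "\<alpha> * \<theta> + (\<beta> - \<alpha>) * V - K \<le> 0 * (\<alpha> + (\<beta> - \<alpha>) * Xm)"
    using T by (simp add: algebra_simps)
  then have "least_slope (\<alpha> * \<theta> + (\<beta> - \<alpha>) * V - K) (\<alpha> + (\<beta> - \<alpha>) * Xm) = 0"
    using least_slope_le[of 0] least_slope_nonneg by (simp add: order_antisym)
  then show ?thesis
    using assms(1,2) by simp
qed

definition mean_on :: "'a measure \<Rightarrow> 'a set \<Rightarrow> ('a \<Rightarrow> real) \<Rightarrow> real" where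
  "mean_on M W f = (LINT v:W|M. f v) / measure M W"

lemma (in finite_measure) set_integral_const:
  assumes "W \<in> sets M"
  shows "(LINT v:W|M. c) = c * measure M W"
  using assms by (simp add: set_lebesgue_integral_def)

lemma (in finite_measure) mean_on_le_const:
  assumes f: "set_integrable M W f" and W: "W \<in> sets M" "0 < measure M W"
    and le: "AE v in M. v \<in> W \<longrightarrow> f v \<le> c"
  shows "mean_on M W f \<le> c"
proof -
  have "(LINT v:W|M. f v) \<le> (LINT v:W|M. c)"
    using f W(1) le
    by (intro set_integral_mono_AE)
      (auto simp: set_integrable_def emeasure_eq_measure intro!: integrable_real_indicator)
  then show ?thesis
    using W by (simp add: mean_on_def set_integral_const divide_le_eq)
qed

lemma (in finite_measure) set_integrable_affine:
  fixes f :: "'a \<Rightarrow> real"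
  assumes "set_integrable M W f" and "W \<in> sets M"
  shows "set_integrable M W (\<lambda>v. k * f v + m)"
proof -
  have "set_integrable M W (\<lambda>v. m)"
    using assms(2) by (auto simp: set_integrable_def emeasure_eq_measure intro!: integrable_real_indicator)
  then show ?thesis
    using set_integral_add(1)[OF set_integrable_mult_right[of k, OF assms(1)]] by simp
qed

lemma (in finite_measure) mean_on_affine:
  assumes f: "set_integrable M W f" and W: "W \<in> sets M" "0 < measure M W"
  shows "mean_on M W (\<lambda>v. k * f v + m) = k * mean_on M W f + m"
proof -
  have "set_integrable M W (\<lambda>v. m)"
    using set_integrable_affine[OF f W(1), of 0 m] by simp
  then have "(LINT v:W|M. k * f v + m) = k * (LINT v:W|M. f v) + m * measure M W"
    using f W(1) by (simp add: set_integral_const)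
  then show ?thesis
    using W by (simp add: mean_on_def field_simps)
qed

lemma (in prob_space) expectation_split_mean_on:
  assumes f: "integrable M f" and W: "W \<in> events" "0 < prob W" "0 < prob (space M - W)"
  shows "expectation f = prob W * mean_on M W f + prob (space M - W) * mean_on M (space M - W) f"
proof -
  have "expectation f = (LINT v:W \<union> (space M - W)|M. f v)"
    using sets.sets_into_space[OF W(1)] set_integral_space[OF f] by (simp add: Un_absorb1)
  also have "\<dots> = (LINT v:W|M. f v) + (LINT v:space M - W|M. f v)"
    using integrable_mult_indicator[OF W(1) f] integrable_mult_indicator[OF sets.compl_sets[OF W(1)] f]
    by (intro set_integral_Un) (auto simp: set_integrable_def)
  finally show ?thesis
    using W by (simp add: mean_on_def)
qed

lemma (in finite_measure) mean_on_weighted_le: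
  assumes W: "set_integrable M W f" "W \<in> sets M" "0 < measure M W"
    and L: "set_integrable M L f" "L \<in> sets M" "0 < measure M L"
    and le: "AE l in M. l \<in> L \<longrightarrow> (\<forall>v\<in>W. p * f v + q * f l \<le> c)"
  shows "p * mean_on M W f + q * mean_on M L f \<le> c"
proof -
  have "AE l in M. l \<in> L \<longrightarrow> q * f l + p * mean_on M W f \<le> c"
    using le
  proof eventually_elim
    case (elim l)
    show ?case
    proof
      assume "l \<in> L"
      then have "mean_on M W (\<lambda>v. p * f v + q * f l) \<le> c"
        using elim by (intro mean_on_le_const set_integrable_affine W) auto
      then show "q * f l + p * mean_on M W f \<le> c"
        using mean_on_affine[OF W] by (simp add: algebra_simps)
    qed
  qed
  then have "mean_on M L (\<lambda>l. q * f l + p * mean_on M W f) \<le> c"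
    by (intro mean_on_le_const set_integrable_affine L)
  then show ?thesis
    using mean_on_affine[OF L] by (simp add: algebra_simps)
qed

section \<open>The ambiguity set\<close>

lemma emeasure_singleton_atomless:
  assumes "atomless M" and "{z} \<in> sets M"
  shows "emeasure M {z} = 0"
proof (rule ccontr)
  assume "emeasure M {z} \<noteq> 0"
  moreover have "emeasure M B = 0 \<or> emeasure M B = emeasure M {z}" if "B \<subseteq> {z}" for B
    using that by (cases "B = {}") (auto dest: subset_singletonD)
  ultimately show False
    using assms unfolding atomless_def by (auto simp: zero_less_iff_neq_zero)
qed

lemma restr_eq_restr_to_subalg:
  assumes "sigma_algebra (space Q) E"
  shows "restr Q E = restr_to_subalg Q (sigma (space Q) E)"
  using sigma_algebra.sets_measure_of_eq[OF assms] by (simp add: restr_def restr_to_subalg_def)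

lemma subalgebra_sigma:
  assumes "sigma_algebra (space Q) E" and "E \<subseteq> sets Q"
  shows "subalgebra Q (sigma (space Q) E)"
  using sigma_algebra.sets_measure_of_eq[OF assms(1)] assms(2)
  by (simp add: subalgebra_def space_measure_of_conv)

lemma density_restr_to_subalg:
  assumes sub: "subalgebra M F" and g: "g \<in> borel_measurable F"
  shows "density (restr_to_subalg M F) g = restr_to_subalg (density M g) F"
proof (rule measure_eqI)
  have sub': "subalgebra (density M g) F"
    using sub by (simp add: subalgebra_def)
  then show "sets (density (restr_to_subalg M F) g) = sets (restr_to_subalg (density M g) F)"
    using sub by (simp add: sets_restr_to_subalg)
  fix A assume "A \<in> sets (density (restr_to_subalg M F) g)"
  then have A: "A \<in> sets F"
    using sub by (simp add: sets_restr_to_subalg)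
  have "emeasure (density (restr_to_subalg M F) g) A = (\<integral>\<^sup>+v. g v * indicator A v \<partial>restr_to_subalg M F)"
    using A sub by (simp add: emeasure_density measurable_in_subalg[OF sub g] sets_restr_to_subalg)
  also have "\<dots> = (\<integral>\<^sup>+v. g v * indicator A v \<partial>M)"
    by (intro nn_integral_subalgebra2[OF sub] borel_measurable_times_ennreal g borel_measurable_indicator A)
  also have "\<dots> = emeasure (restr_to_subalg (density M g) F) A"
    using A sub sub' measurable_from_subalg[OF sub g]
    by (simp add: emeasure_restr_to_subalg emeasure_density subalgebra_def subset_iff)
  finally show "emeasure (density (restr_to_subalg M F) g) A = emeasure (restr_to_subalg (density M g) F) A" .
qed

locale ambiguity_set =
  fixes a b :: real
    and D :: "real measure \<Rightarrow> real measure \<Rightarrow> ennreal"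
    and P :: "real measure"
    and \<eta> :: real
  assumes divergence: "assumption_D a b D"
    and reference: "prob_on {a..b} (sets (Bor a b)) P"
    and radius_nonneg: "0 \<le> \<eta>"
begin

abbreviation Amb :: "real measure set" where
  "Amb \<equiv> amb a b D P \<eta>"

lemma amb_prob_on: "Q \<in> Amb \<Longrightarrow> prob_on {a..b} (sets (Bor a b)) Q"
  by (simp add: amb_def)

lemma amb_divergence_le: "Q \<in> Amb \<Longrightarrow> D Q P \<le> ennreal \<eta>"
  by (simp add: amb_def)

lemma
  shows sets_reference: "sets P = sets (Bor a b)"
    and space_reference: "space P = {a..b}"
  using prob_on_Bor_D[OF reference] by auto

sublocale reference: prob_space P
  using prob_on_Bor_D(1)[OF reference] .

lemma divergence_reference:
  assumes Q: "prob_on {a..b} (sets (Bor a b)) Q"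
  shows divergence_self: "Q = P \<Longrightarrow> D Q P = 0"
    and divergence_finite_absolutely_continuous: "D Q P < \<infinity> \<Longrightarrow> absolutely_continuous P Q"
    and divergence_restr_le: "subsigma {a..b} E \<Longrightarrow> D (restr Q E) (restr P E) \<le> D Q P"
    and divergence_restr_eq: "subsigma {a..b} E \<Longrightarrow> absolutely_continuous P Q \<Longrightarrow>
      (AE z in P. RN_deriv (restr P E) (restr Q E) z = RN_deriv P Q z) \<Longrightarrow>
      D (restr Q E) (restr P E) = D Q P"
proof -
  note D = divergence[unfolded assumption_D_def, rule_format, OF conjI[OF subsigma_Bor conjI[OF reference Q]]]
  have sub: "subsigma {a..b} E \<Longrightarrow> E \<subseteq> sets (Bor a b)"
    by (simp add: subsigma_def Bor_def)
  show "Q = P \<Longrightarrow> D Q P = 0" and "D Q P < \<infinity> \<Longrightarrow> absolutely_continuous P Q"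
    using D by blast+
  show "subsigma {a..b} E \<Longrightarrow> D (restr Q E) (restr P E) \<le> D Q P"
    using D sub by blast
  show "subsigma {a..b} E \<Longrightarrow> absolutely_continuous P Q \<Longrightarrow>
      (AE z in P. RN_deriv (restr P E) (restr Q E) z = RN_deriv P Q z) \<Longrightarrow>
      D (restr Q E) (restr P E) = D Q P"
    using D sub by blast
qed

lemma reference_in_amb: "P \<in> Amb"
  using divergence_self[OF reference] reference radius_nonneg by (simp add: amb_def)

lemma amb_nonempty: "Amb \<noteq> {}"
  using reference_in_amb by blast

lemma absolutely_continuous_amb:
  assumes "Q \<in> Amb"
  shows "absolutely_continuous P Q"
  using amb_divergence_le[OF assms]
  by (intro divergence_finite_absolutely_continuous[OF amb_prob_on[OF assms]]) (simp add: le_less_trans)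

lemma AE_amb_neq:
  assumes "atomless P" and "z \<in> {a..b}" and "Q \<in> Amb"
  shows "AE v in Q. v \<noteq> z"
proof -
  have "{z} \<in> sets P"
    using assms(2) by (simp add: sets_reference Bor_def sets_restrict_space_iff)
  then have "{z} \<in> null_sets P"
    using emeasure_singleton_atomless[OF assms(1)] by blast
  then have "{z} \<in> null_sets Q"
    using absolutely_continuous_amb[OF assms(3)] unfolding absolutely_continuous_def by blast
  then show ?thesis
    using AE_not_in by fastforce
qed

lemma set_integrable_reference:
  assumes "bounded_measurable_on a b u" and "S \<in> sets (Bor a b)"
  shows "set_integrable P S u"
  using integrable_bounded_measurable_on[OF reference bounded_measurable_on_indicator_mult[OF assms]]
  by (simp add: set_integrable_def)

lemma integrable_Texp:
  assumes f: "bounded_measurable_rule a b f" and i: "i \<in> {1,2}"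
  shows "integrable P (Texp P f i)"
proof -
  obtain C where C: "\<forall>u\<in>{a..b}. \<forall>v\<in>{a..b}. \<bar>f i u v\<bar> \<le> C"
    and fm: "(\<lambda>(u, v). f i u v) \<in> borel_measurable (Bor a b \<Otimes>\<^sub>M Bor a b)"
    using f i unfolding bounded_measurable_rule_def by blast
  have "sets (Bor a b \<Otimes>\<^sub>M P) = sets (Bor a b \<Otimes>\<^sub>M Bor a b)"
    by (intro sets_pair_measure_cong) (simp_all add: sets_reference)
  then have "(\<lambda>(u, v). f i u v) \<in> borel_measurable (Bor a b \<Otimes>\<^sub>M P)"
    using fm measurable_cong_sets by blast
  then have "Texp P f i \<in> borel_measurable (Bor a b)"
    unfolding Texp_def by (rule reference.borel_measurable_lebesgue_integral)
  moreover have "\<bar>Texp P f i u\<bar> \<le> C" if "u \<in> {a..b}" for u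
  proof -
    have "- C \<le> f i u v \<and> f i u v \<le> C" if "v \<in> {a..b}" for v
      using C \<open>u \<in> {a..b}\<close> that by force
    from integral_between_Bor[OF reference
        bounded_measurable_on_measurable[OF bounded_measurable_on_section[OF f i that]] this]
    show ?thesis by (simp add: Texp_def abs_le_iff)
  qed
  ultimately have "bounded_measurable_on a b (Texp P f i)"
    unfolding bounded_measurable_on_def by blast
  then show ?thesis
    by (rule integrable_bounded_measurable_on[OF reference])
qed

lemma integral_reference_mean_on:
  assumes u: "bounded_measurable_on a b u" and W: "W \<in> sets (Bor a b)"
    and pos: "0 < measure P W" "0 < measure P ({a..b} - W)"
  shows "(\<integral>v. u v \<partial>P)
    = mean_on P ({a..b} - W) u + measure P W * (mean_on P W u - mean_on P ({a..b} - W) u)"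
proof -
  have PL: "measure P ({a..b} - W) = 1 - measure P W"
    using reference.prob_compl[of W] W by (simp add: sets_reference space_reference)
  have "(\<integral>v. u v \<partial>P) = measure P W * mean_on P W u + measure P ({a..b} - W) * mean_on P ({a..b} - W) u"
    using reference.expectation_split_mean_on[OF integrable_bounded_measurable_on[OF reference u], of W]
      W pos by (simp add: sets_reference space_reference)
  then show ?thesis
    unfolding PL by (simp add: algebra_simps)
qed

lemma bdd_below_amb_integrals:
  assumes "bounded_measurable_on a b g"
  shows "bdd_below ((\<lambda>Q. \<integral>v. g v \<partial>Q) ` Amb)"
proof -
  obtain C where C: "\<And>v. v \<in> {a..b} \<Longrightarrow> \<bar>g v\<bar> \<le> C"
    using assms by (metis bounded_measurable_onE)
  have "- C \<le> g v \<and> g v \<le> C" if "v \<in> {a..b}" for v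
    using C[OF that] by linarith
  then have "- C \<le> (\<integral>v. g v \<partial>Q)" if "Q \<in> Amb" for Q
    by (rule integral_between_Bor(1)[OF amb_prob_on[OF that] bounded_measurable_on_measurable[OF assms]])
  then show ?thesis
    by (rule bdd_belowI2)
qed

lemma divergence_density_restr:
  assumes E: "subsigma {a..b} E" and g: "g \<in> borel_measurable (sigma {a..b} E)"
    and Q: "prob_on {a..b} (sets (Bor a b)) (density P g)"
  shows "D (density P g) P = D (restr (density P g) E) (restr P E)"
proof -
  let ?Q = "density P g" and ?F = "sigma {a..b} E"
  have E_sa: "sigma_algebra {a..b} E" and E_sub: "E \<subseteq> sets (Bor a b)"
    using E by (auto simp: subsigma_def Bor_def)
  have subP: "subalgebra P ?F" and subQ: "subalgebra ?Q ?F"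
    using subalgebra_sigma[of P E] subalgebra_sigma[of ?Q E] E_sa E_sub
    by (auto simp: space_reference sets_reference)
  have restrP: "restr P E = restr_to_subalg P ?F" and restrQ: "restr ?Q E = restr_to_subalg ?Q ?F"
    using restr_eq_restr_to_subalg[of P E] restr_eq_restr_to_subalg[of ?Q E] E_sa
    by (auto simp: space_reference)
  have g_sub: "g \<in> borel_measurable (restr_to_subalg P ?F)"
    by (rule measurable_in_subalg[OF subP g])
  have gP: "g \<in> borel_measurable P"
    by (rule measurable_from_subalg[OF subP g])
  have dens: "density (restr_to_subalg P ?F) g = restr_to_subalg ?Q ?F"
    by (rule density_restr_to_subalg[OF subP g])
  interpret F: prob_space "restr_to_subalg P ?F"
    by (rule prob_space_restr_to_subalg[OF subP reference.prob_space_axioms])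
  have "AE z in restr_to_subalg P ?F. g z = RN_deriv (restr_to_subalg P ?F) (restr_to_subalg ?Q ?F) z"
    by (rule F.RN_deriv_unique[OF g_sub dens])
  then have "AE z in P. g z = RN_deriv (restr P E) (restr ?Q E) z"
    unfolding restrP restrQ by (rule AE_restr_to_subalg[OF subP])
  moreover have "AE z in P. g z = RN_deriv P ?Q z"
    by (rule reference.RN_deriv_unique[OF gP refl])
  ultimately have "AE z in P. RN_deriv (restr P E) (restr ?Q E) z = RN_deriv P ?Q z"
    by eventually_elim simp
  then show ?thesis
    using divergence_restr_eq[OF Q E absolutely_continuousI_density[OF gP]] by simp
qed

text \<open>
  The coarsening of \<open>Q\<close> along \<open>W\<close> keeps the weights \<open>Q\<close> gives to \<open>W\<close> and to its complement
  but is proportional to \<open>P\<close> inside each; by D4 and D5 it stays in the ambiguity set.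
\<close>

definition coarsening :: "real measure \<Rightarrow> real set \<Rightarrow> real measure" where
  "coarsening Q W = density P (\<lambda>v. ennreal
     (if v \<in> W then measure Q W / measure P W
      else measure Q ({a..b} - W) / measure P ({a..b} - W)))"

lemma emeasure_coarsening:
  assumes Q: "Q \<in> Amb" and W: "W \<in> sets (Bor a b)" "0 < measure P W" "0 < measure P ({a..b} - W)"
    and A: "A \<in> {{}, W, {a..b} - W, {a..b}}"
  shows "emeasure (coarsening Q W) A = emeasure Q A"
proof -
  define L where "L = {a..b} - W"
  interpret Q: prob_space Q using prob_on_Bor_D(1)[OF amb_prob_on[OF Q]] .
  have sets_Q: "sets Q = sets (Bor a b)"
    using prob_on_Bor_D(3)[OF amb_prob_on[OF Q]] .
  have WL: "W \<in> sets P" "L \<in> sets P" "W \<subseteq> {a..b}"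
    using W(1) sets.sets_into_space[OF W(1)] sets.compl_sets[OF W(1)] by (auto simp: L_def sets_reference)
  have const: "emeasure (coarsening Q W) B = ennreal (measure Q B / measure P B) * emeasure P B"
    if B: "B \<in> {W, L}" for B
  proof -
    have "emeasure (coarsening Q W) B
        = (\<integral>\<^sup>+v. ennreal (measure Q B / measure P B) * indicator B v \<partial>P)"
      unfolding coarsening_def using B WL
      by (subst emeasure_density) (auto intro!: nn_integral_cong simp: indicator_def L_def)
    also have "\<dots> = ennreal (measure Q B / measure P B) * emeasure P B"
      using B WL by (auto intro!: nn_integral_cmult_indicator)
    finally show ?thesis .
  qed
  have WL_eq: "emeasure (coarsening Q W) B = emeasure Q B" if B: "B \<in> {W, L}" for B
  proof -
    have "0 < measure P B" using B W(2,3) by (auto simp: L_def)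
    then show ?thesis
      using const[OF B] by (simp add: reference.emeasure_eq_measure Q.emeasure_eq_measure ennreal_mult'[symmetric])
  qed
  have "emeasure (coarsening Q W) {a..b} = emeasure (coarsening Q W) W + emeasure (coarsening Q W) L"
    using WL by (subst plus_emeasure) (auto simp: coarsening_def L_def Un_absorb1)
  also have "\<dots> = emeasure Q W + emeasure Q L"
    using WL_eq by simp
  also have "\<dots> = emeasure Q {a..b}"
    using WL by (subst plus_emeasure) (auto simp: sets_Q sets_reference L_def Un_absorb1)
  finally have "emeasure (coarsening Q W) {a..b} = emeasure Q {a..b}" .
  moreover have "A = {} \<or> A \<in> {W, L} \<or> A = {a..b}"
    using A by (auto simp: L_def)
  ultimately show ?thesis
    using WL_eq by (elim disjE) simp_all
qed

lemma coarsening_in_amb: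
  assumes Q: "Q \<in> Amb" and W: "W \<in> sets (Bor a b)" "0 < measure P W" "0 < measure P ({a..b} - W)"
  shows "coarsening Q W \<in> Amb"
proof -
  define E where "E = {{}, W, {a..b} - W, {a..b}}"
  have W_sub: "W \<subseteq> {a..b}"
    using sets.sets_into_space[OF W(1)] by simp
  have E_sa: "sigma_algebra {a..b} E"
    unfolding E_def by (rule sigma_algebra_single_set[OF W_sub])
  have E: "subsigma {a..b} E"
    using E_sa W(1) sets.top[of "Bor a b"] sets.compl_sets[OF W(1)]
    by (auto simp: subsigma_def E_def Bor_def)
  have Q_on: "prob_on {a..b} (sets (Bor a b)) Q"
    by (rule amb_prob_on[OF Q])
  have Q'_on: "prob_on {a..b} (sets (Bor a b)) (coarsening Q W)"
    unfolding prob_on_def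
    using emeasure_coarsening[OF Q W, of "{a..b}"] prob_on_Bor_D[OF Q_on] prob_space.emeasure_space_1[of Q]
    by (auto intro!: prob_spaceI simp: coarsening_def sets_reference space_reference)
  have g: "(\<lambda>v. ennreal (if v \<in> W then measure Q W / measure P W
      else measure Q ({a..b} - W) / measure P ({a..b} - W))) \<in> borel_measurable (sigma {a..b} E)"
    using E_sa W_sub sigma_algebra.sets_measure_of_eq[OF E_sa]
    by (intro measurable_compose[OF _ measurable_ennreal] measurable_If_set)
      (auto simp: E_def space_measure_of_conv Int_absorb2)
  have "E \<subseteq> Pow {a..b}"
    using W_sub by (auto simp: E_def)
  then have restr_eq: "restr (coarsening Q W) E = restr Q E"
    unfolding restr_def prob_on_Bor_D(2)[OF Q'_on] prob_on_Bor_D(2)[OF Q_on]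
    by (rule measure_of_eq)
      (use sigma_algebra.sigma_sets_eq[OF E_sa] emeasure_coarsening[OF Q W] in \<open>auto simp: E_def\<close>)
  have "D (coarsening Q W) P = D (restr (coarsening Q W) E) (restr P E)"
    using divergence_density_restr[OF E g] Q'_on by (simp add: coarsening_def)
  also have "\<dots> \<le> D Q P"
    unfolding restr_eq by (rule divergence_restr_le[OF Q_on E])
  also have "\<dots> \<le> ennreal \<eta>"
    by (rule amb_divergence_le[OF Q])
  finally show ?thesis
    using Q'_on by (simp add: amb_def)
qed

lemma integral_coarsening:
  assumes Q: "Q \<in> Amb" and W: "W \<in> sets (Bor a b)" "0 < measure P W" "0 < measure P ({a..b} - W)"
    and u: "bounded_measurable_on a b u"
  shows "(\<integral>v. u v \<partial>coarsening Q W)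
    = measure Q W * mean_on P W u + measure Q ({a..b} - W) * mean_on P ({a..b} - W) u"
proof -
  define L where "L = {a..b} - W"
  define g where "g v = (if v \<in> W then measure Q W / measure P W else measure Q L / measure P L)" for v
  have L: "L \<in> sets (Bor a b)"
    using sets.compl_sets[OF W(1)] by (simp add: L_def)
  have gm: "g \<in> borel_measurable P"
    unfolding g_def using W(1) sets.sets_into_space[OF W(1)]
    by (intro measurable_If_set) (auto simp: sets_reference space_reference Int_absorb2)
  have um: "u \<in> borel_measurable P"
    by (rule measurable_prob_on_Bor[OF reference bounded_measurable_on_measurable[OF u]])
  have int: "integrable P (\<lambda>v. indicator S v * u v)" if "S \<in> sets (Bor a b)" for S
    by (rule integrable_bounded_measurable_on[OF reference bounded_measurable_on_indicator_mult[OF u that]])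
  have "(\<integral>v. u v \<partial>coarsening Q W) = (\<integral>v. g v *\<^sub>R u v \<partial>P)"
    unfolding coarsening_def g_def[symmetric] L_def[symmetric]
    by (rule integral_density[OF um gm]) (simp add: g_def)
  also have "\<dots> = (\<integral>v. measure Q W / measure P W * (indicator W v * u v)
      + measure Q L / measure P L * (indicator L v * u v) \<partial>P)"
    by (intro Bochner_Integration.integral_cong) (auto simp: g_def L_def space_reference indicator_def)
  also have "\<dots> = measure Q W / measure P W * (LINT v:W|P. u v)
      + measure Q L / measure P L * (LINT v:L|P. u v)"
    using int[OF W(1)] int[OF L] by (simp add: set_lebesgue_integral_def)
  finally show ?thesis
    by (simp add: mean_on_def L_def)
qed

lemma INF_integral_le_coarse:
  assumes W: "W \<in> sets (Bor a b)" "0 < measure P W" "0 < measure P ({a..b} - W)"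
    and u: "bounded_measurable_on a b u"
    and order: "mean_on P ({a..b} - W) u \<le> mean_on P W u"
  shows "(INF Q\<in>Amb. \<integral>v. u v \<partial>Q)
    \<le> mean_on P ({a..b} - W) u + (mean_on P W u - mean_on P ({a..b} - W) u) * (INF Q\<in>Amb. measure Q W)"
    (is "_ \<le> ?uL + ?d * _")
proof -
  have "(INF Q\<in>Amb. \<integral>v. u v \<partial>Q) \<le> ?d * measure Q W + ?uL" if Q: "Q \<in> Amb" for Q
  proof -
    interpret Q: prob_space Q
      using prob_on_Bor_D(1)[OF amb_prob_on[OF Q]] .
    have QL: "measure Q ({a..b} - W) = 1 - measure Q W"
      using Q.prob_compl[of W] W(1) prob_on_Bor_D[OF amb_prob_on[OF Q]] by simp
    have "(\<integral>v. u v \<partial>coarsening Q W) = ?d * measure Q W + ?uL"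
      unfolding integral_coarsening[OF Q W u] QL by (simp add: algebra_simps)
    moreover have "(INF Q\<in>Amb. \<integral>v. u v \<partial>Q) \<le> (\<integral>v. u v \<partial>coarsening Q W)"
      by (rule cINF_lower[OF bdd_below_amb_integrals[OF u] coarsening_in_amb[OF Q W]])
    ultimately show ?thesis by simp
  qed
  then have "(INF Q\<in>Amb. \<integral>v. u v \<partial>Q) \<le> (INF Q\<in>Amb. ?d * measure Q W + ?uL)"
    by (intro cINF_greatest amb_nonempty)
  also have "\<dots> = ?d * (INF Q\<in>Amb. measure Q W) + ?uL"
    using order by (intro cINF_affine amb_nonempty bdd_belowI2[where m = 0]) auto
  finally show ?thesis by simp
qed

end

section \<open>Worst-case utilities and the envelope formula\<close>

locale auction = ambiguity_set +
  fixes x :: "nat \<Rightarrow> real \<Rightarrow> real \<Rightarrow> real"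
  assumes allocation: "allocation_rule a b x"
begin

abbreviation Xm :: "nat \<Rightarrow> real \<Rightarrow> real" where
  "Xm \<equiv> Xmin a b D P \<eta> x"

definition envelope :: "nat \<Rightarrow> real \<Rightarrow> real" where
  "envelope i \<theta> = integral {a..\<theta>} (Xm i)"

lemma allocation_bounds:
  assumes "i \<in> {1,2}" and "u \<in> {a..b}" and "v \<in> {a..b}"
  shows "0 \<le> x i u v" and "x i u v \<le> 1"
  using allocation assms unfolding allocation_rule_def by force+

lemma bounded_measurable_allocation:
  assumes "i \<in> {1,2}" and "u \<in> {a..b}"
  shows "bounded_measurable_on a b (x i u)"
  using allocation assms by (intro bounded_measurable_on_section) (auto simp: allocation_rule_def)

definition win_set :: "nat \<Rightarrow> real \<Rightarrow> real set" where
  "win_set i \<theta> = {v \<in> {a..b}. x i \<theta> v = 1}"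

lemma win_set_sets:
  assumes "i \<in> {1,2}" and "\<theta> \<in> {a..b}"
  shows "win_set i \<theta> \<in> sets (Bor a b)"
  using borel_measurable_eq[OF bounded_measurable_on_measurable[OF bounded_measurable_allocation[OF assms]]
      borel_measurable_const[of 1]]
  by (simp add: win_set_def)

lemma expected_allocation_bounds:
  assumes "Q \<in> Amb" and "i \<in> {1,2}" and "u \<in> {a..b}"
  shows "0 \<le> (\<integral>v. x i u v \<partial>Q)" and "(\<integral>v. x i u v \<partial>Q) \<le> 1"
  using integral_between_Bor[OF amb_prob_on[OF assms(1)]
      bounded_measurable_on_measurable[OF bounded_measurable_allocation[OF assms(2,3)]], of 0 1]
    allocation_bounds[OF assms(2,3)] by auto

lemma Xm_bounds:
  assumes "i \<in> {1,2}" and "u \<in> {a..b}"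
  shows "0 \<le> Xm i u" and "Xm i u \<le> Xexp P x i u" and "Xexp P x i u \<le> 1"
proof -
  have bdd: "bdd_below ((\<lambda>Q. \<integral>v. x i u v \<partial>Q) ` Amb)"
    using expected_allocation_bounds(1)[OF _ assms] by (intro bdd_belowI2[where m = 0])
  show "0 \<le> Xm i u"
    unfolding Xmin_def using expected_allocation_bounds(1)[OF _ assms]
    by (intro cINF_greatest amb_nonempty)
  show "Xm i u \<le> Xexp P x i u"
    unfolding Xmin_def Xexp_def by (rule cINF_lower[OF bdd reference_in_amb])
  show "Xexp P x i u \<le> 1"
    unfolding Xexp_def by (rule expected_allocation_bounds(2)[OF reference_in_amb assms])
qed

lemma envelope_bounds:
  assumes "mono_on {a..b} (Xm i)" and "i \<in> {1,2}" and "\<theta> \<in> {a..b}"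
  shows "0 \<le> envelope i \<theta>" and "envelope i \<theta> \<le> (\<theta> - a) * Xm i \<theta>"
proof -
  have "0 \<le> (\<theta> - a) * Xm i a"
    using Xm_bounds(1)[OF assms(2), of a] assms(3) by simp
  then show "0 \<le> envelope i \<theta>" and "envelope i \<theta> \<le> (\<theta> - a) * Xm i \<theta>"
    using mono_on_integral_increment[OF assms(1), of a \<theta>] assms(3) by (auto simp: envelope_def)
qed

lemma integral_affine_allocation:
  assumes "Q \<in> Amb" and "i \<in> {1,2}" and "h \<in> {a..b}"
  shows "(\<integral>v. k * x i h v + m \<partial>Q) = k * (\<integral>v. x i h v \<partial>Q) + m"
proof -
  interpret Q: prob_space Q
    using prob_on_Bor_D(1)[OF amb_prob_on[OF assms(1)]] .
  have "integrable Q (x i h)"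
    by (rule integrable_bounded_measurable_on[OF amb_prob_on[OF assms(1)] bounded_measurable_allocation[OF assms(2,3)]])
  then show ?thesis by (simp add: Q.prob_space)
qed

lemma integral_payoff:
  assumes "Q \<in> Amb" and t: "bounded_measurable_rule a b t" and "i \<in> {1,2}" and "h \<in> {a..b}"
  shows "(\<integral>v. \<theta> * x i h v - t i h v \<partial>Q) = \<theta> * (\<integral>v. x i h v \<partial>Q) - (\<integral>v. t i h v \<partial>Q)"
  using integrable_bounded_measurable_on[OF amb_prob_on[OF assms(1)] bounded_measurable_allocation[OF assms(3,4)]]
    integrable_bounded_measurable_on[OF amb_prob_on[OF assms(1)] bounded_measurable_on_section[OF t assms(3,4)]]
  by simp

lemma Urep_eq_INF:
  assumes "bounded_measurable_rule a b t" and "i \<in> {1,2}" and "h \<in> {a..b}"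
  shows "Urep a b D P \<eta> x t i \<theta> h = (INF Q\<in>Amb. \<theta> * (\<integral>v. x i h v \<partial>Q) - (\<integral>v. t i h v \<partial>Q))"
  unfolding Urep_def using integral_payoff[OF _ assms] by (intro INF_cong) auto

lemma bounded_measurable_payoff:
  assumes "bounded_measurable_rule a b t" and "i \<in> {1,2}" and "h \<in> {a..b}"
  shows "bounded_measurable_on a b (\<lambda>v. \<theta> * x i h v - t i h v)"
  by (intro bounded_measurable_on_affine bounded_measurable_allocation bounded_measurable_on_section assms)

lemma Umin_Urep: "Umin a b D P \<eta> x t i \<theta> = Urep a b D P \<eta> x t i \<theta> \<theta>"
  by (simp add: Urep_def Umin_def)

lemma Urep_win_lose:
  assumes "i \<in> {1,2}" and "h \<in> {a..b}"
    and t: "\<And>v. v \<in> {a..b} \<Longrightarrow> t i h v = t\<^sub>w * x i h v + t\<^sub>l * (1 - x i h v)"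
  shows "Urep a b D P \<eta> x t i \<theta> h \<le> (\<theta> - t\<^sub>w + t\<^sub>l) * Xm i h - t\<^sub>l"
    and "0 \<le> \<theta> - t\<^sub>w + t\<^sub>l \<Longrightarrow> Urep a b D P \<eta> x t i \<theta> h = (\<theta> - t\<^sub>w + t\<^sub>l) * Xm i h - t\<^sub>l"
proof -
  have "(\<integral>v. \<theta> * x i h v - t i h v \<partial>Q) = (\<theta> - t\<^sub>w + t\<^sub>l) * (\<integral>v. x i h v \<partial>Q) - t\<^sub>l"
    if Q: "Q \<in> Amb" for Q
  proof -
    have "(\<integral>v. \<theta> * x i h v - t i h v \<partial>Q) = (\<integral>v. (\<theta> - t\<^sub>w + t\<^sub>l) * x i h v - t\<^sub>l \<partial>Q)"
      using prob_on_Bor_D(2)[OF amb_prob_on[OF Q]] t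
      by (intro Bochner_Integration.integral_cong) (auto simp: algebra_simps)
    then show ?thesis
      using integral_affine_allocation[OF Q assms(1,2), of _ "- t\<^sub>l"] by simp
  qed
  then have U: "Urep a b D P \<eta> x t i \<theta> h = (INF Q\<in>Amb. (\<theta> - t\<^sub>w + t\<^sub>l) * (\<integral>v. x i h v \<partial>Q) + - t\<^sub>l)"
    unfolding Urep_def by (intro INF_cong) auto
  have bdd: "bdd_below ((\<lambda>Q. \<integral>v. x i h v \<partial>Q) ` Amb)" "bdd_above ((\<lambda>Q. \<integral>v. x i h v \<partial>Q) ` Amb)"
    using expected_allocation_bounds[OF _ assms(1,2)]
    by (intro bdd_belowI2[where m = 0] bdd_aboveI2[where M = 1]; simp)+
  show "Urep a b D P \<eta> x t i \<theta> h \<le> (\<theta> - t\<^sub>w + t\<^sub>l) * Xm i h - t\<^sub>l"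
    unfolding U Xmin_def using cINF_affine_le[OF reference_in_amb bdd, of _ "- t\<^sub>l"] by simp
  show "0 \<le> \<theta> - t\<^sub>w + t\<^sub>l \<Longrightarrow> Urep a b D P \<eta> x t i \<theta> h = (\<theta> - t\<^sub>w + t\<^sub>l) * Xm i h - t\<^sub>l"
    unfolding U Xmin_def using cINF_affine[OF amb_nonempty bdd(1), of _ "- t\<^sub>l"] by simp
qed

lemma feasible_if_win_lose_envelope:
  assumes wl: "win_lose_dependent a b x t"
    and U: "\<And>i \<theta>. i \<in> {1,2} \<Longrightarrow> \<theta> \<in> {a..b} \<Longrightarrow> Umin a b D P \<eta> x t i \<theta> = envelope i \<theta>"
    and mono: "\<And>i. i \<in> {1,2} \<Longrightarrow> mono_on {a..b} (Xm i)"
  shows "feasible a b D P \<eta> x t"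
proof -
  obtain t\<^sub>w t\<^sub>l where t: "\<forall>i\<in>{1,2}. \<forall>h\<in>{a..b}. h - t\<^sub>w i h \<ge> - t\<^sub>l i h \<and>
      (\<forall>v\<in>{a..b}. t i h v = t\<^sub>w i h * x i h v + t\<^sub>l i h * (1 - x i h v))"
    using wl unfolding win_lose_dependent_def by blast
  have "Urep a b D P \<eta> x t i \<theta> h \<le> Urep a b D P \<eta> x t i \<theta> \<theta>"
    if i: "i \<in> {1,2}" and \<theta>: "\<theta> \<in> {a..b}" and h: "h \<in> {a..b}" for i \<theta> h
  proof -
    have rep: "\<And>v. v \<in> {a..b} \<Longrightarrow> t i h v = t\<^sub>w i h * x i h v + t\<^sub>l i h * (1 - x i h v)"
      and nonneg: "0 \<le> h - t\<^sub>w i h + t\<^sub>l i h"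
      using bspec[OF bspec[OF t i] h] by auto
    have "Urep a b D P \<eta> x t i \<theta> h \<le> (\<theta> - t\<^sub>w i h + t\<^sub>l i h) * Xm i h - t\<^sub>l i h"
      by (rule Urep_win_lose(1)[where t = t, OF i h rep])
    also have "\<dots> = Urep a b D P \<eta> x t i h h + (\<theta> - h) * Xm i h"
      using Urep_win_lose(2)[where t = t, OF i h rep nonneg] by (simp add: algebra_simps)
    also have "\<dots> = envelope i h + (\<theta> - h) * Xm i h"
      using U[OF i h] by (simp add: Umin_Urep)
    also have "\<dots> \<le> envelope i \<theta>"
      unfolding envelope_def by (rule mono_on_integral_tangent_le[OF mono[OF i] h \<theta>])
    finally show ?thesis
      using U[OF i \<theta>] by (simp add: Umin_Urep)
  qed
  moreover have "0 \<le> Umin a b D P \<eta> x t i \<theta>" if "i \<in> {1,2}" and "\<theta> \<in> {a..b}" for i \<theta>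
    using envelope_bounds(1)[OF mono[OF that(1)] that] U[OF that] by simp
  ultimately show ?thesis
    unfolding feasible_def incentive_compatible_def individually_rational_def by blast
qed

lemma envelope_le_Umin:
  assumes t: "transfer_rule a b t" and feasible: "feasible a b D P \<eta> x t"
    and i: "i \<in> {1,2}" and \<theta>: "\<theta> \<in> {a..b}" and mono: "mono_on {a..b} (Xm i)"
  shows "envelope i \<theta> \<le> Umin a b D P \<eta> x t i \<theta>"
proof -
  let ?U = "Umin a b D P \<eta> x t i"
  have t: "bounded_measurable_rule a b t"
    using t by (simp add: transfer_rule_def)
  have increment: "(s - h) * Xm i h \<le> ?U s - ?U h" if "a \<le> h" "h \<le> s" "s \<le> b" for h s
  proof -
    have h: "h \<in> {a..b}" and s: "s \<in> {a..b}"
      using that by auto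
    have "bdd_below ((\<lambda>Q. \<integral>v. h * x i h v - t i h v \<partial>Q) ` Amb)"
      by (rule bdd_below_amb_integrals[OF bounded_measurable_payoff[OF t i h]])
    moreover have "(\<lambda>Q. \<integral>v. h * x i h v - t i h v \<partial>Q) ` Amb
        = (\<lambda>Q. h * (\<integral>v. x i h v \<partial>Q) - (\<integral>v. t i h v \<partial>Q)) ` Amb"
      using integral_payoff[OF _ t i h] by (intro image_cong) auto
    moreover have "bdd_below ((\<lambda>Q. \<integral>v. x i h v \<partial>Q) ` Amb)"
      using expected_allocation_bounds(1)[OF _ i h] by (intro bdd_belowI2[where m = 0])
    ultimately have "?U h + (s - h) * Xm i h
        \<le> (INF Q\<in>Amb. (h * (\<integral>v. x i h v \<partial>Q) - (\<integral>v. t i h v \<partial>Q)) + (s - h) * (\<integral>v. x i h v \<partial>Q))"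
      unfolding Umin_Urep Urep_eq_INF[OF t i h] Xmin_def
      using that by (intro cINF_add_mult_ge amb_nonempty) auto
    also have "\<dots> = Urep a b D P \<eta> x t i s h"
      unfolding Urep_eq_INF[OF t i h] by (simp add: algebra_simps)
    also have "\<dots> \<le> Urep a b D P \<eta> x t i s s"
      using feasible i h s unfolding feasible_def incentive_compatible_def by blast
    also have "\<dots> = ?U s"
      by (simp add: Umin_Urep)
    finally show ?thesis by simp
  qed
  have "envelope i \<theta> \<le> ?U \<theta> - ?U a"
    unfolding envelope_def using \<theta> increment
    by (intro mono_on_integral_le_increment[OF mono]) auto
  moreover have "0 \<le> ?U a"
    using feasible i \<theta> unfolding feasible_def individually_rational_def by auto
  ultimately show ?thesis by simp
qed

end

section \<open>The optimal win-lose transfer\<close>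

locale revenue_maximization = auction +
  fixes \<alpha> \<beta> K :: real
  assumes atomless: "atomless P"
    and allocation_X: "assumption_X a b D P \<eta> x"
    and weights: "0 \<le> \<alpha>" "\<alpha> \<le> \<beta>"
    and bound_nonneg: "0 \<le> K"
begin

lemma Xm_mono: "i \<in> {1,2} \<Longrightarrow> mono_on {a..b} (Xm i)"
  using allocation_X unfolding assumption_X_def by blast

text \<open>
  The least slope \<open>c \<ge> 0\<close> for which the win-lose transfer with worst-case utility
  \<open>envelope i \<theta>\<close> meets assumption T at \<open>\<theta>\<close>: there \<open>\<alpha> t\<^sup>w - \<beta> t\<^sup>l\<close> equals
  \<open>\<alpha> \<theta> + (\<beta> - \<alpha>) envelope i \<theta> - c (\<alpha> + (\<beta> - \<alpha>) Xm i \<theta>)\<close>.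
\<close>

definition slope :: "nat \<Rightarrow> real \<Rightarrow> real" where
  "slope i \<theta> = least_slope (\<alpha> * \<theta> + (\<beta> - \<alpha>) * envelope i \<theta> - K) (\<alpha> + (\<beta> - \<alpha>) * Xm i \<theta>)"

definition loser_payment :: "nat \<Rightarrow> real \<Rightarrow> real" where
  "loser_payment i \<theta> = slope i \<theta> * Xm i \<theta> - envelope i \<theta>"

definition winner_payment :: "nat \<Rightarrow> real \<Rightarrow> real" where
  "winner_payment i \<theta> = \<theta> - slope i \<theta> + loser_payment i \<theta>"

definition optimal_transfer :: "nat \<Rightarrow> real \<Rightarrow> real \<Rightarrow> real" where
  "optimal_transfer i \<theta> v = winner_payment i \<theta> * x i \<theta> v + loser_payment i \<theta> * (1 - x i \<theta> v)"

lemma slope_bounds: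
  assumes i: "i \<in> {1,2}" and \<theta>: "\<theta> \<in> {a..b}"
  shows "0 \<le> slope i \<theta>" and "slope i \<theta> \<le> \<bar>a\<bar> + (\<theta> - a)"
    and "\<alpha> * \<theta> + (\<beta> - \<alpha>) * envelope i \<theta> - K \<le> slope i \<theta> * (\<alpha> + (\<beta> - \<alpha>) * Xm i \<theta>)"
proof -
  let ?n = "\<alpha> * \<theta> + (\<beta> - \<alpha>) * envelope i \<theta> - K" and ?d = "\<alpha> + (\<beta> - \<alpha>) * Xm i \<theta>"
  have Xm: "0 \<le> Xm i \<theta>"
    using Xm_bounds(1)[OF i \<theta>] .
  have d: "\<alpha> \<le> ?d"
    using weights Xm by simp
  have "(\<beta> - \<alpha>) * envelope i \<theta> \<le> (\<beta> - \<alpha>) * ((\<theta> - a) * Xm i \<theta>)"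
    using envelope_bounds(2)[OF Xm_mono[OF i] i \<theta>] weights by (intro mult_left_mono) auto
  moreover have "\<alpha> * a \<le> ?d * \<bar>a\<bar>"
  proof -
    have "\<alpha> * a \<le> \<alpha> * \<bar>a\<bar>"
      using weights by (intro mult_left_mono) auto
    also have "\<dots> \<le> ?d * \<bar>a\<bar>"
      using d by (intro mult_right_mono) auto
    finally show ?thesis .
  qed
  ultimately have n: "?n \<le> (\<bar>a\<bar> + (\<theta> - a)) * ?d"
    using bound_nonneg by (simp add: algebra_simps)
  show "0 \<le> slope i \<theta>"
    by (simp add: slope_def least_slope_nonneg)
  show "slope i \<theta> \<le> \<bar>a\<bar> + (\<theta> - a)"
    unfolding slope_def using n \<theta> by (intro least_slope_le) auto
  show "?n \<le> slope i \<theta> * ?d"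
    unfolding slope_def using n weights Xm by (intro le_least_slope_mult) auto
qed

lemma envelope_mono:
  assumes i: "i \<in> {1,2}"
  shows "mono_on {a..b} (envelope i)"
proof (rule mono_onI)
  fix r s assume rs: "r \<in> {a..b}" "s \<in> {a..b}" "r \<le> s"
  then have "0 \<le> (s - r) * Xm i r"
    using Xm_bounds(1)[OF i] by simp
  also have "\<dots> \<le> envelope i s - envelope i r"
    unfolding envelope_def using rs by (intro mono_on_integral_increment(1)[OF Xm_mono[OF i]]) auto
  finally show "envelope i r \<le> envelope i s" by simp
qed

lemma measurable_payments:
  assumes i: "i \<in> {1,2}"
  shows "loser_payment i \<in> borel_measurable (Bor a b)" and "winner_payment i \<in> borel_measurable (Bor a b)"
proof -
  note [measurable] = borel_measurable_mono_on_fnc[OF Xm_mono[OF i]]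
    borel_measurable_mono_on_fnc[OF envelope_mono[OF i]]
    measurable_restrict_space1[OF measurable_ident_sets[OF refl], of borel "{a..b}"]
  show "loser_payment i \<in> borel_measurable (Bor a b)"
    unfolding loser_payment_def slope_def least_slope_def Bor_def by measurable
  then show "winner_payment i \<in> borel_measurable (Bor a b)"
    unfolding winner_payment_def slope_def least_slope_def Bor_def by measurable
qed

lemma payments_bounded:
  assumes i: "i \<in> {1,2}"
  obtains C where "\<And>\<theta>. \<theta> \<in> {a..b} \<Longrightarrow> \<bar>loser_payment i \<theta>\<bar> \<le> C \<and> \<bar>winner_payment i \<theta>\<bar> \<le> C"
proof
  fix \<theta> assume \<theta>: "\<theta> \<in> {a..b}"
  have slope: "0 \<le> slope i \<theta>" "slope i \<theta> \<le> \<bar>a\<bar> + (b - a)"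
    using slope_bounds(1,2)[OF i \<theta>] \<theta> by auto
  have Xm: "0 \<le> Xm i \<theta>" "Xm i \<theta> \<le> 1"
    using Xm_bounds[OF i \<theta>] by auto
  have "slope i \<theta> * Xm i \<theta> \<le> slope i \<theta> * 1"
    using slope(1) Xm(2) by (intro mult_left_mono)
  moreover have "0 \<le> slope i \<theta> * Xm i \<theta>"
    using slope(1) Xm(1) by simp
  moreover have "(\<theta> - a) * Xm i \<theta> \<le> (b - a) * 1"
    using \<theta> Xm by (intro mult_mono) auto
  moreover have "\<bar>\<theta>\<bar> \<le> \<bar>a\<bar> + \<bar>b\<bar>"
    using \<theta> by auto
  ultimately show "\<bar>loser_payment i \<theta>\<bar> \<le> 3 * (\<bar>a\<bar> + \<bar>b\<bar> + (b - a))
      \<and> \<bar>winner_payment i \<theta>\<bar> \<le> 3 * (\<bar>a\<bar> + \<bar>b\<bar> + (b - a))"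
    using slope envelope_bounds[OF Xm_mono[OF i] i \<theta>]
    unfolding winner_payment_def loser_payment_def by (simp add: abs_le_iff) linarith
qed

lemma bounded_measurable_optimal_transfer: "bounded_measurable_rule a b optimal_transfer"
  unfolding bounded_measurable_rule_def
proof (intro ballI conjI)
  fix i :: nat assume i: "i \<in> {1,2}"
  have "(\<lambda>(u, v). x i u v) \<in> borel_measurable (Bor a b \<Otimes>\<^sub>M Bor a b)"
    using allocation i unfolding allocation_rule_def bounded_measurable_rule_def by blast
  then have [measurable]: "(\<lambda>p. x i (fst p) (snd p)) \<in> borel_measurable (Bor a b \<Otimes>\<^sub>M Bor a b)"
    by (simp add: case_prod_beta')
  note [measurable] = measurable_payments[OF i]
  have "(\<lambda>p. optimal_transfer i (fst p) (snd p)) \<in> borel_measurable (Bor a b \<Otimes>\<^sub>M Bor a b)"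
    unfolding optimal_transfer_def by measurable
  then show "(\<lambda>(u, v). optimal_transfer i u v) \<in> borel_measurable (Bor a b \<Otimes>\<^sub>M Bor a b)"
    by (simp add: case_prod_beta')
  obtain C where C: "\<And>\<theta>. \<theta> \<in> {a..b} \<Longrightarrow> \<bar>loser_payment i \<theta>\<bar> \<le> C \<and> \<bar>winner_payment i \<theta>\<bar> \<le> C"
    using payments_bounded[OF i] by blast
  have "\<bar>optimal_transfer i u v\<bar> \<le> C" if "u \<in> {a..b}" "v \<in> {a..b}" for u v
  proof -
    have "\<bar>optimal_transfer i u v\<bar> \<le> \<bar>winner_payment i u\<bar> * x i u v + \<bar>loser_payment i u\<bar> * (1 - x i u v)"
      using allocation_bounds[OF i that] unfolding optimal_transfer_def
      by (simp add: abs_mult order_trans[OF abs_triangle_ineq])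
    also have "\<dots> \<le> C * x i u v + C * (1 - x i u v)"
      using allocation_bounds[OF i that] C[OF that(1)] by (intro add_mono mult_right_mono) auto
    finally show ?thesis by (simp add: algebra_simps)
  qed
  then show "\<exists>C. \<forall>u\<in>{a..b}. \<forall>v\<in>{a..b}. \<bar>optimal_transfer i u v\<bar> \<le> C"
    by blast
qed

lemma constraints_R_optimal_transfer: "constraints_R a b D P \<eta> \<alpha> \<beta> K x optimal_transfer"
  unfolding constraints_R_def
proof (intro conjI ballI)
  show "transfer_rule a b optimal_transfer"
    using bounded_measurable_optimal_transfer by (simp add: transfer_rule_def)
  show "win_lose_dependent a b x optimal_transfer"
    unfolding win_lose_dependent_def
    using slope_bounds(1) by (intro exI[of _ winner_payment] exI[of _ loser_payment])
      (auto simp: optimal_transfer_def winner_payment_def)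
next
  fix i :: nat and \<theta> assume i: "i \<in> {1,2}" and \<theta>: "\<theta> \<in> {a..b}"
  have "Umin a b D P \<eta> x optimal_transfer i \<theta>
      = (\<theta> - winner_payment i \<theta> + loser_payment i \<theta>) * Xm i \<theta> - loser_payment i \<theta>"
    unfolding Umin_Urep using slope_bounds(1)[OF i \<theta>]
    by (intro Urep_win_lose(2)[OF i \<theta>]) (auto simp: optimal_transfer_def winner_payment_def)
  then show "Umin a b D P \<eta> x optimal_transfer i \<theta> = integral {a..\<theta>} (Xm i)"
    by (simp add: winner_payment_def loser_payment_def envelope_def)
next
  show "Tclass a b \<alpha> \<beta> K x optimal_transfer"
    unfolding Tclass_def
  proof (intro ballI impI)
    fix i :: nat and \<theta> \<theta>w \<theta>l
    assume i: "i \<in> {1,2}" and \<theta>: "\<theta> \<in> {a..b}"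
      and wl: "x i \<theta> \<theta>w = 1 \<and> x i \<theta> \<theta>l = 0"
    have "\<alpha> * optimal_transfer i \<theta> \<theta>w - \<beta> * optimal_transfer i \<theta> \<theta>l
        = \<alpha> * \<theta> + (\<beta> - \<alpha>) * envelope i \<theta> - slope i \<theta> * (\<alpha> + (\<beta> - \<alpha>) * Xm i \<theta>)"
      using wl by (simp add: optimal_transfer_def winner_payment_def loser_payment_def algebra_simps)
    then show "\<alpha> * optimal_transfer i \<theta> \<theta>w - \<beta> * optimal_transfer i \<theta> \<theta>l \<le> K"
      using slope_bounds(3)[OF i \<theta>] by simp
  qed
qed

lemma Texp_optimal_transfer:
  assumes "i \<in> {1,2}" and "\<theta> \<in> {a..b}"
  shows "Texp P optimal_transfer i \<theta>
    = \<theta> * Xexp P x i \<theta> - envelope i \<theta> - slope i \<theta> * (Xexp P x i \<theta> - Xm i \<theta>)"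
proof -
  have "Texp P optimal_transfer i \<theta>
      = (\<integral>v. (winner_payment i \<theta> - loser_payment i \<theta>) * x i \<theta> v + loser_payment i \<theta> \<partial>P)"
    unfolding Texp_def optimal_transfer_def by (simp add: algebra_simps)
  also have "\<dots> = (winner_payment i \<theta> - loser_payment i \<theta>) * Xexp P x i \<theta> + loser_payment i \<theta>"
    unfolding Xexp_def by (rule integral_affine_allocation[OF reference_in_amb assms])
  finally show ?thesis
    by (simp add: winner_payment_def loser_payment_def algebra_simps)
qed

lemma allocation_eq_indicator_win_set:
  assumes "i \<in> {1,2}" and "\<theta> \<in> {a..b}" and "v \<in> {a..b}" and "v \<noteq> \<theta>"
  shows "x i \<theta> v = indicator (win_set i \<theta>) v"
proof -
  have "x i \<theta> v \<in> {0, 1}"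
    using allocation_X assms unfolding assumption_X_def by blast
  then show ?thesis
    using assms(3) by (auto simp: win_set_def indicator_def)
qed

lemma expected_allocation_win_set:
  assumes Q: "Q \<in> Amb" and i: "i \<in> {1,2}" and \<theta>: "\<theta> \<in> {a..b}"
  shows "(\<integral>v. x i \<theta> v \<partial>Q) = measure Q (win_set i \<theta>)"
proof -
  have Q_on: "prob_on {a..b} (sets (Bor a b)) Q"
    by (rule amb_prob_on[OF Q])
  have "(\<integral>v. x i \<theta> v \<partial>Q) = (\<integral>v. indicator (win_set i \<theta>) v \<partial>Q)"
  proof (rule integral_cong_AE)
    show "x i \<theta> \<in> borel_measurable Q"
      by (rule measurable_prob_on_Bor[OF Q_on bounded_measurable_on_measurable[OF bounded_measurable_allocation[OF i \<theta>]]])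
    show "(indicator (win_set i \<theta>) :: real \<Rightarrow> real) \<in> borel_measurable Q"
      using win_set_sets[OF i \<theta>] prob_on_Bor_D(3)[OF Q_on] by simp
    show "AE v in Q. x i \<theta> v = indicator (win_set i \<theta>) v"
      using AE_amb_neq[OF atomless \<theta> Q] AE_space[of Q]
      by eventually_elim (use allocation_eq_indicator_win_set[OF i \<theta>] prob_on_Bor_D(2)[OF Q_on] in auto)
  qed
  also have "\<dots> = measure Q (win_set i \<theta>)"
    using prob_on_Bor_D(2)[OF Q_on] by (simp add: win_set_def Int_absorb2 subset_iff)
  finally show ?thesis .
qed

lemma Tclass_mean_on:
  fixes t :: "nat \<Rightarrow> real \<Rightarrow> real \<Rightarrow> real" and i :: nat and \<theta> :: real
  defines "u \<equiv> \<lambda>v. \<theta> * x i \<theta> v - t i \<theta> v" and "W \<equiv> win_set i \<theta>" and "L \<equiv> {a..b} - win_set i \<theta>"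
  assumes T: "Tclass a b \<alpha> \<beta> K x t" and t: "bounded_measurable_rule a b t"
    and i: "i \<in> {1,2}" and \<theta>: "\<theta> \<in> {a..b}" "\<theta> < b"
    and pos: "0 < measure P W" "0 < measure P L"
  shows "\<alpha> * (\<theta> - mean_on P W u) + \<beta> * mean_on P L u \<le> K"
proof -
  have u: "bounded_measurable_on a b u"
    unfolding u_def by (rule bounded_measurable_payoff[OF t i \<theta>(1)])
  have W: "W \<in> sets (Bor a b)" and L: "L \<in> sets (Bor a b)"
    using win_set_sets[OF i \<theta>(1)] sets.compl_sets[OF win_set_sets[OF i \<theta>(1)]] by (simp_all add: W_def L_def)
  have "AE l in P. l \<in> L \<longrightarrow> (\<forall>v\<in>W. - \<alpha> * u v + \<beta> * u l \<le> K - \<alpha> * \<theta>)"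
    using AE_amb_neq[OF atomless \<theta>(1) reference_in_amb]
  proof eventually_elim
    case (elim l)
    show ?case
    proof (intro impI ballI)
      fix v assume l: "l \<in> L" and v: "v \<in> W"
      then have "l \<in> {a..b}" and "v \<in> {a..b}" and "x i \<theta> v = 1"
        by (auto simp: W_def L_def win_set_def)
      moreover have "x i \<theta> l = 0"
        using allocation_eq_indicator_win_set[OF i \<theta>(1) \<open>l \<in> {a..b}\<close> elim] l by (simp add: L_def)
      ultimately have "\<alpha> * t i \<theta> v - \<beta> * t i \<theta> l \<le> K" and "x i \<theta> v = 1" and "x i \<theta> l = 0"
        using T i \<theta> unfolding Tclass_def by blast+
      then show "- \<alpha> * u v + \<beta> * u l \<le> K - \<alpha> * \<theta>"
        by (simp add: u_def algebra_simps)
    qed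
  qed
  then have "- \<alpha> * mean_on P W u + \<beta> * mean_on P L u \<le> K - \<alpha> * \<theta>"
    using W L by (intro reference.mean_on_weighted_le set_integrable_reference[OF u] pos)
      (simp_all add: sets_reference)
  then show ?thesis by (simp add: algebra_simps)
qed

lemma win_set_measure_cases:
  assumes i: "i \<in> {1,2}" and \<theta>: "\<theta> \<in> {a..b}" "\<theta> < b"
  shows "measure P (win_set i \<theta>) = 0
    \<or> 0 < measure P (win_set i \<theta>) \<and> 0 < measure P ({a..b} - win_set i \<theta>)"
proof -
  have "measure P (win_set i \<theta>) \<noteq> 1"
    using allocation_X i \<theta> expected_allocation_win_set[OF reference_in_amb i \<theta>(1)]
    unfolding assumption_X_def Xexp_def by auto
  moreover have "measure P ({a..b} - win_set i \<theta>) = 1 - measure P (win_set i \<theta>)"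
    using reference.prob_compl win_set_sets[OF i \<theta>(1)] by (simp add: sets_reference space_reference)
  ultimately show ?thesis
    using reference.prob_le_1 measure_nonneg[of P] by (auto simp: less_le)
qed

lemma envelope_slope_le_expected_payoff:
  assumes t: "constraints_P a b D P \<eta> \<alpha> \<beta> K x t"
    and i: "i \<in> {1,2}" and \<theta>: "\<theta> \<in> {a..b}" "\<theta> < b"
  shows "envelope i \<theta> + slope i \<theta> * (Xexp P x i \<theta> - Xm i \<theta>) \<le> (\<integral>v. \<theta> * x i \<theta> v - t i \<theta> v \<partial>P)"
proof -
  have tr: "transfer_rule a b t" and T: "Tclass a b \<alpha> \<beta> K x t"
    and VU: "envelope i \<theta> \<le> Umin a b D P \<eta> x t i \<theta>"
    using t envelope_le_Umin[OF _ _ i \<theta>(1) Xm_mono[OF i]] by (auto simp: constraints_P_def)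
  have tm: "bounded_measurable_rule a b t"
    using tr by (simp add: transfer_rule_def)
  define u where "u = (\<lambda>v. \<theta> * x i \<theta> v - t i \<theta> v)"
  define W where "W = win_set i \<theta>"
  define L where "L = {a..b} - W"
  let ?U = "Umin a b D P \<eta> x t i \<theta>"
  have u: "bounded_measurable_on a b u" and W: "W \<in> sets (Bor a b)"
    unfolding u_def W_def by (rule bounded_measurable_payoff[OF tm i \<theta>(1)] win_set_sets[OF i \<theta>(1)])+
  have X: "Xexp P x i \<theta> = measure P W" and Xm: "Xm i \<theta> = (INF Q\<in>Amb. measure Q W)"
    unfolding Xexp_def Xmin_def W_def using expected_allocation_win_set[OF _ i \<theta>(1)] reference_in_amb
    by (auto intro!: INF_cong)
  have U: "?U = (INF Q\<in>Amb. \<integral>v. u v \<partial>Q)"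
    by (simp add: Umin_def u_def)
  have UP: "?U \<le> (\<integral>v. u v \<partial>P)"
    unfolding U by (rule cINF_lower[OF bdd_below_amb_integrals[OF u] reference_in_amb])
  consider "measure P W = 0" | "0 < measure P W" "0 < measure P L"
    using win_set_measure_cases[OF i \<theta>] by (auto simp: W_def L_def)
  then show ?thesis
  proof cases
    case 1
    then show ?thesis
      using X Xm_bounds[OF i \<theta>(1)] VU UP by (simp add: u_def)
  next
    case 2
    have split: "(\<integral>v. u v \<partial>P) = mean_on P L u + Xexp P x i \<theta> * (mean_on P W u - mean_on P L u)"
      unfolding X L_def by (rule integral_reference_mean_on[OF u W 2[unfolded L_def]])
    have coarse: "?U \<le> mean_on P L u + (mean_on P W u - mean_on P L u) * Xm i \<theta>"
      if "mean_on P L u \<le> mean_on P W u"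
      unfolding U Xm L_def using W 2 that
      by (intro INF_integral_le_coarse u) (auto simp: L_def)
    have "\<alpha> * (\<theta> - mean_on P W u) + \<beta> * mean_on P L u \<le> K"
      using Tclass_mean_on[OF T tm i \<theta>] 2 by (simp add: u_def W_def L_def)
    then show ?thesis
      unfolding slope_def u_def[symmetric]
      using least_slope_envelope_bound[OF VU UP split coarse] Xm_bounds[OF i \<theta>(1)] weights by simp
  qed
qed

lemma Texp_le_optimal_transfer:
  assumes t: "constraints_P a b D P \<eta> \<alpha> \<beta> K x t"
    and i: "i \<in> {1,2}" and \<theta>: "\<theta> \<in> {a..b}" "\<theta> < b"
  shows "Texp P t i \<theta> \<le> Texp P optimal_transfer i \<theta>"
proof -
  have "bounded_measurable_rule a b t"
    using t by (simp add: constraints_P_def transfer_rule_def)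
  then have "Texp P t i \<theta> = \<theta> * Xexp P x i \<theta> - (\<integral>v. \<theta> * x i \<theta> v - t i \<theta> v \<partial>P)"
    unfolding Texp_def Xexp_def by (simp add: integral_payoff[OF reference_in_amb _ i \<theta>(1)])
  then show ?thesis
    using envelope_slope_le_expected_payoff[OF assms] Texp_optimal_transfer[OF i \<theta>(1)] by simp
qed

lemma revenue_le_optimal_transfer:
  assumes "constraints_P a b D P \<eta> \<alpha> \<beta> K x t"
  shows "revenue P t \<le> revenue P optimal_transfer"
proof -
  have t: "bounded_measurable_rule a b t"
    using assms by (simp add: constraints_P_def transfer_rule_def)
  have "(\<integral>\<theta>. Texp P t i \<theta> \<partial>P) \<le> (\<integral>\<theta>. Texp P optimal_transfer i \<theta> \<partial>P)" if i: "i \<in> {1,2}" for i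
  proof (rule integral_mono_AE[OF integrable_Texp[OF t i] integrable_Texp[OF bounded_measurable_optimal_transfer i]])
    have "b \<in> {a..b}"
      using reference.not_empty by (auto simp: space_reference)
    show "AE \<theta> in P. Texp P t i \<theta> \<le> Texp P optimal_transfer i \<theta>"
      using AE_amb_neq[OF atomless \<open>b \<in> {a..b}\<close> reference_in_amb] AE_space[of P]
      by eventually_elim (auto simp: space_reference intro!: Texp_le_optimal_transfer[OF assms i])
  qed
  then show ?thesis
    unfolding revenue_def by (intro sum_mono) auto
qed

end

theorem theorem1:
  fixes a b \<eta> \<alpha> \<beta> K :: real
    and D :: "real measure \<Rightarrow> real measure \<Rightarrow> ennreal"
    and P :: "real measure"
    and x t :: "nat \<Rightarrow> real \<Rightarrow> real \<Rightarrow> real"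
  assumes "0 < a" and "a < b"
    and "assumption_D a b D"
    and "prob_on {a..b} (sets (Bor a b)) P" and "atomless P"
    and "\<eta> > 0"
    and "allocation_rule a b x"
    and "assumption_X a b D P \<eta> x"
    and "0 \<le> \<alpha>" and "\<alpha> \<le> \<beta>" and "\<beta> \<le> 1" and "K \<ge> 0"
    and "solves P (constraints_R a b D P \<eta> \<alpha> \<beta> K x) t"
  shows "solves P (constraints_P a b D P \<eta> \<alpha> \<beta> K x) t"
proof -
  interpret revenue_maximization a b D P \<eta> x \<alpha> \<beta> K
    using assms by unfold_locales auto
  have R: "constraints_R a b D P \<eta> \<alpha> \<beta> K x t"
    and best: "\<And>t'. constraints_R a b D P \<eta> \<alpha> \<beta> K x t' \<Longrightarrow> revenue P t' \<le> revenue P t"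
    using assms(13) unfolding solves_def by blast+
  have "feasible a b D P \<eta> x t"
    using R Xm_mono by (intro feasible_if_win_lose_envelope) (auto simp: constraints_R_def envelope_def)
  then have "constraints_P a b D P \<eta> \<alpha> \<beta> K x t"
    using R by (simp add: constraints_P_def constraints_R_def)
  moreover have "revenue P t' \<le> revenue P t" if "constraints_P a b D P \<eta> \<alpha> \<beta> K x t'" for t'
    using revenue_le_optimal_transfer[OF that] best[OF constraints_R_optimal_transfer] by linarith
  ultimately show ?thesis
    unfolding solves_def by blast
qed

end
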